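(* Let $G$ be a hyperbolic group acting by cubical automorphisms on a CAT$(0)$ cube complex $X$, and let $X^b$ be the cubical subdivision of $X$ (with the induced $G$--action). Then the stabilizers of hyperplanes for the $G$--action on $X$ are all quasi-convex in $G$ if and only if the stabilizers of hyperplanes for the $G$--action on $X^b$ are all quasi-convex in $G$.
   Context: The cubical subdivision $X^b$ of a cube complex $X$ is obtained by replacing each $n$--cube of $X$ by $2^n$ $n$--cubes, subdividing each coordinate interval into two equal halves, glued in the way induced from $X$. *)

theory Defs
  imports Complex_Main "HOL-Algebra.Group_Action" "HOL-Algebra.Generated_Groups"
begin

definition walk :: "('v \<Rightarrow> 'v \<Rightarrow> bool) \<Rightarrow> 'v list \<Rightarrow> bool" where
  "walk E ps \<longleftrightarrow> ps \<noteq> [] \<and> (\<forall>i < length ps - 1. E (ps ! i) (ps ! Suc i))"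

definition gdist :: "('v \<Rightarrow> 'v \<Rightarrow> bool) \<Rightarrow> 'v \<Rightarrow> 'v \<Rightarrow> nat" where
  "gdist E u v = (LEAST n. \<exists>ps. walk E ps \<and> hd ps = u \<and> last ps = v \<and> length ps = Suc n)"

text \<open>A median graph: simple connected graph on V in which every triple has a unique median.
  These are exactly the 1-skeleta of CAT(0) cube complexes (Chepoi, Roller).\<close>
definition median_graph :: "'v set \<Rightarrow> ('v \<Rightarrow> 'v \<Rightarrow> bool) \<Rightarrow> bool" where
  "median_graph V E \<longleftrightarrow>
     (\<forall>u v. E u v \<longrightarrow> u \<in> V \<and> v \<in> V \<and> E v u \<and> u \<noteq> v) \<and>
     (\<forall>u\<in>V. \<forall>v\<in>V. \<exists>ps. walk E ps \<and> hd ps = u \<and> last ps = v) \<and>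
     (\<forall>x\<in>V. \<forall>y\<in>V. \<forall>z\<in>V. \<exists>!m. m \<in> V \<and>
        gdist E x m + gdist E m y = gdist E x y \<and>
        gdist E y m + gdist E m z = gdist E y z \<and>
        gdist E x m + gdist E m z = gdist E x z)"

text \<open>A cube of dimension k: a vertex set C parametrised by the vertices of [0,1]^k
  (subsets of {..<k}) such that adjacency corresponds to differing in one coordinate.\<close>
definition cube_param :: "'v set \<Rightarrow> ('v \<Rightarrow> 'v \<Rightarrow> bool) \<Rightarrow> nat \<Rightarrow> (nat set \<Rightarrow> 'v) \<Rightarrow> 'v set \<Rightarrow> bool" where
  "cube_param V E k f C \<longleftrightarrow> C \<subseteq> V \<and> bij_betw f {x. x \<subseteq> {..<k}} C \<and>
     (\<forall>x y. x \<subseteq> {..<k} \<longrightarrow> y \<subseteq> {..<k} \<longrightarrow> (E (f x) (f y) \<longleftrightarrow> card ((x - y) \<union> (y - x)) = 1))"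

definition is_cube :: "'v set \<Rightarrow> ('v \<Rightarrow> 'v \<Rightarrow> bool) \<Rightarrow> 'v set \<Rightarrow> bool" where
  "is_cube V E C \<longleftrightarrow> (\<exists>k f. cube_param V E k f C)"

definition is_facet :: "'v set \<Rightarrow> ('v \<Rightarrow> 'v \<Rightarrow> bool) \<Rightarrow> 'v set \<Rightarrow> 'v set \<Rightarrow> bool" where
  "is_facet V E D C \<longleftrightarrow> (\<exists>k f i b. cube_param V E k f C \<and> i < k \<and>
       D = f ` {x. x \<subseteq> {..<k} \<and> (i \<in> x \<longleftrightarrow> b)})"

text \<open>1-skeleton of the cubical subdivision X^b: vertices are the cubes of X (their barycentres),
  two being adjacent iff one is a codimension-1 face of the other.\<close>
definition subdiv_verts :: "'v set \<Rightarrow> ('v \<Rightarrow> 'v \<Rightarrow> bool) \<Rightarrow> 'v set set" where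
  "subdiv_verts V E = {C. is_cube V E C}"

definition subdiv_adj :: "'v set \<Rightarrow> ('v \<Rightarrow> 'v \<Rightarrow> bool) \<Rightarrow> 'v set \<Rightarrow> 'v set \<Rightarrow> bool" where
  "subdiv_adj V E C D \<longleftrightarrow> is_facet V E D C \<or> is_facet V E C D"

definition edges :: "('v \<Rightarrow> 'v \<Rightarrow> bool) \<Rightarrow> 'v set set" where
  "edges E = {{u, v} | u v. E u v}"

definition square_opp :: "('v \<Rightarrow> 'v \<Rightarrow> bool) \<Rightarrow> 'v set \<Rightarrow> 'v set \<Rightarrow> bool" where
  "square_opp E e e' \<longleftrightarrow> (\<exists>a b c d. E a b \<and> E b c \<and> E c d \<and> E d a \<and> distinct [a, b, c, d] \<and>
       e = {a, b} \<and> e' = {d, c})"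

text \<open>Hyperplanes, represented by the set of edges they cross (parallelism classes).\<close>
definition hyperplanes :: "('v \<Rightarrow> 'v \<Rightarrow> bool) \<Rightarrow> 'v set set set" where
  "hyperplanes E = (\<lambda>e. {e'. (e, e') \<in> {(x, y). square_opp E x y}\<^sup>*}) ` edges E"

definition hyp_stab :: "('g, 'b) monoid_scheme \<Rightarrow> ('g \<Rightarrow> 'v \<Rightarrow> 'v) \<Rightarrow> 'v set set \<Rightarrow> 'g set" where
  "hyp_stab G \<psi> H = {g \<in> carrier G. (\<lambda>e. \<psi> g ` e) ` H = H}"

text \<open>Action by cubical automorphisms (= automorphisms of the 1-skeleton).\<close>
definition cubical_action :: "('g, 'b) monoid_scheme \<Rightarrow> 'v set \<Rightarrow> ('v \<Rightarrow> 'v \<Rightarrow> bool) \<Rightarrow> ('g \<Rightarrow> 'v \<Rightarrow> 'v) \<Rightarrow> bool" where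
  "cubical_action G V E \<phi> \<longleftrightarrow> group_action G V \<phi> \<and>
     (\<forall>g \<in> carrier G. \<forall>u v. E u v \<longrightarrow> E (\<phi> g u) (\<phi> g v))"

definition word_len :: "('g, 'b) monoid_scheme \<Rightarrow> 'g set \<Rightarrow> 'g \<Rightarrow> nat" where
  "word_len G S g = (LEAST n. \<exists>ws. length ws = n \<and> set ws \<subseteq> S \<union> (m_inv G) ` S \<and>
       g = foldr (\<lambda>a b. a \<otimes>\<^bsub>G\<^esub> b) ws \<one>\<^bsub>G\<^esub>)"

definition wdist :: "('g, 'b) monoid_scheme \<Rightarrow> 'g set \<Rightarrow> 'g \<Rightarrow> 'g \<Rightarrow> nat" where
  "wdist G S g h = word_len G S (m_inv G g \<otimes>\<^bsub>G\<^esub> h)"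

definition fin_gen_set :: "('g, 'b) monoid_scheme \<Rightarrow> 'g set \<Rightarrow> bool" where
  "fin_gen_set G S \<longleftrightarrow> finite S \<and> S \<subseteq> carrier G \<and> generate G S = carrier G"

definition gromov_prod :: "('g, 'b) monoid_scheme \<Rightarrow> 'g set \<Rightarrow> 'g \<Rightarrow> 'g \<Rightarrow> 'g \<Rightarrow> real" where
  "gromov_prod G S x y w = (real (wdist G S w x) + real (wdist G S w y) - real (wdist G S x y)) / 2"

text \<open>Gromov hyperbolicity of the Cayley graph, via the four-point condition on vertices.\<close>
definition hyperbolic_wrt :: "('g, 'b) monoid_scheme \<Rightarrow> 'g set \<Rightarrow> bool" where
  "hyperbolic_wrt G S \<longleftrightarrow> (\<exists>\<delta>::real. \<forall>x\<in>carrier G. \<forall>y\<in>carrier G. \<forall>z\<in>carrier G. \<forall>w\<in>carrier G.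
      gromov_prod G S x y w \<ge> min (gromov_prod G S x z w) (gromov_prod G S y z w) - \<delta>)"

definition cayley_geodesic :: "('g, 'b) monoid_scheme \<Rightarrow> 'g set \<Rightarrow> 'g list \<Rightarrow> bool" where
  "cayley_geodesic G S ps \<longleftrightarrow> ps \<noteq> [] \<and> set ps \<subseteq> carrier G \<and>
     (\<forall>i < length ps - 1. wdist G S (ps ! i) (ps ! Suc i) = 1) \<and>
     wdist G S (hd ps) (last ps) = length ps - 1"

definition quasiconvex :: "('g, 'b) monoid_scheme \<Rightarrow> 'g set \<Rightarrow> 'g set \<Rightarrow> bool" where
  "quasiconvex G S H \<longleftrightarrow> (\<exists>K::nat. \<forall>ps. cayley_geodesic G S ps \<and> hd ps \<in> H \<and> last ps \<in> H \<longrightarrow>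
       (\<forall>p \<in> set ps. \<exists>h \<in> H. wdist G S p h \<le> K))"

end

theory Submission
  imports Defs
begin

abbreviation symdiff :: "'a set \<Rightarrow> 'a set \<Rightarrow> 'a set" where
  "symdiff x y \<equiv> (x - y) \<union> (y - x)"

abbreviation hamming :: "'a set \<Rightarrow> 'a set \<Rightarrow> nat" where
  "hamming x y \<equiv> card (symdiff x y)"

definition flip :: "'a set \<Rightarrow> 'a \<Rightarrow> 'a set" where
  "flip x i = symdiff x {i}"

lemma flip_subset: "x \<subseteq> I \<Longrightarrow> i \<in> I \<Longrightarrow> flip x i \<subseteq> I"
  and flip_flip [simp]: "flip (flip x i) i = x"
  and flip_neq: "flip x i \<noteq> x"
  and flip_commute: "flip (flip x i) j = flip (flip x j) i"
  and flip_inj: "flip x i = flip x j \<longleftrightarrow> i = j"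
  and flip_flip_neq: "i \<noteq> j \<Longrightarrow> flip (flip x i) j \<noteq> x"
  and symdiff_flip [simp]: "symdiff x (flip x i) = {i}"
  and symdiff_flip_flip: "i \<noteq> j \<Longrightarrow> symdiff (flip x i) (flip x j) = {i, j}"
  by (auto simp: flip_def)

lemma mem_flip: "j \<in> flip x i \<longleftrightarrow> (j = i \<longleftrightarrow> j \<notin> x)"
  by (auto simp: flip_def)

lemma hamming_commute: "hamming x y = hamming y x"
  by (simp add: Un_commute)

lemma hamming_flip [simp]: "hamming x (flip x i) = 1" "hamming (flip x i) x = 1"
  by (simp_all add: hamming_commute[of "flip x i"])

lemma hamming_eq_1_flip:
  assumes "hamming x z = 1"
  obtains j where "z = flip x j" "j \<in> symdiff x z"
proof -
  obtain j where j: "symdiff x z = {j}"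
    using assms by (rule card_1_singletonE)
  then have "z = flip x j"
    unfolding flip_def by blast
  with j that show ?thesis by blast
qed

lemma symdiff_flip_mem: "t \<in> symdiff x y \<Longrightarrow> symdiff (flip x t) y = symdiff x y - {t}"
  by (auto simp: flip_def)

lemma hamming_triangle:
  "finite (symdiff x y) \<Longrightarrow> finite (symdiff y z) \<Longrightarrow> hamming x z \<le> hamming x y + hamming y z"
  by (rule order_trans[OF card_mono card_Un_le]) auto

lemma symdiff_induct [consumes 1, case_names base flip]:
  assumes "finite (symdiff x y)" and "P y"
    and step: "\<And>x t. finite (symdiff x y) \<Longrightarrow> t \<in> symdiff x y \<Longrightarrow> P (flip x t) \<Longrightarrow> P x"
  shows "P x"
  using assms(1)
proof (induction "hamming x y" arbitrary: x)
  case 0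
  then show ?case using \<open>P y\<close> by auto
next
  case (Suc n)
  then obtain t where t: "t \<in> symdiff x y"
    by (metis card.empty ex_in_conv nat.distinct(1))
  then have "finite (symdiff (flip x t) y)" "hamming (flip x t) y = n"
    using Suc.hyps(2) Suc.prems by (simp_all add: symdiff_flip_mem)
  then show ?case
    using Suc.hyps(1) step[OF Suc.prems t] by blast
qed

text \<open>Among two adjacent vertices \<open>a\<close>, \<open>flip a j\<close> of the hypercube, \<open>u\<close> is closer to the one that
  agrees with it in coordinate \<open>j\<close>; so Hamming isometries map coordinate halves to coordinate halves.\<close>

lemma hamming_less_flip_iff:
  assumes "finite (symdiff u a)"
  shows "hamming u a < hamming u (flip a j) \<longleftrightarrow> (j \<in> u \<longleftrightarrow> j \<in> a)"
proof (cases "j \<in> symdiff u a")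
  case True
  then have "symdiff u (flip a j) = symdiff u a - {j}"
    by (auto simp: flip_def)
  then have "hamming u (flip a j) < hamming u a"
    using True assms by (metis card_Diff1_less)
  with True show ?thesis
    by auto
next
  case False
  then have "symdiff u (flip a j) = insert j (symdiff u a)"
    by (auto simp: flip_def)
  then have "hamming u (flip a j) = Suc (hamming u a)"
    using False assms by (metis card_insert_disjoint)
  with False show ?thesis
    by auto
qed

lemma hamming_nonexpanding:
  assumes "finite A" "finite B" and maps: "\<And>x. x \<subseteq> A \<Longrightarrow> \<tau> x \<subseteq> B"
    and adj: "\<And>x y. x \<subseteq> A \<Longrightarrow> y \<subseteq> A \<Longrightarrow> hamming x y = 1 \<Longrightarrow> hamming (\<tau> x) (\<tau> y) = 1"
    and "x \<subseteq> A" "y \<subseteq> A"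
  shows "hamming (\<tau> x) (\<tau> y) \<le> hamming x y"
proof -
  have fin: "\<And>x y. x \<subseteq> A \<Longrightarrow> y \<subseteq> A \<Longrightarrow> finite (symdiff (\<tau> x) (\<tau> y))"
    using maps \<open>finite B\<close> by (meson finite_Diff finite_UnI finite_subset)
  have "finite (symdiff x y)"
    using assms by (meson finite_Diff finite_UnI finite_subset)
  then show ?thesis
    using \<open>x \<subseteq> A\<close>
  proof (induction x rule: symdiff_induct)
    case (flip x t)
    then have x': "flip x t \<subseteq> A"
      using \<open>y \<subseteq> A\<close> by (intro flip_subset) auto
    have "hamming (\<tau> x) (\<tau> y) \<le> hamming (\<tau> x) (\<tau> (flip x t)) + hamming (\<tau> (flip x t)) (\<tau> y)"
      using fin flip.prems x' \<open>y \<subseteq> A\<close> by (intro hamming_triangle)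
    also have "\<dots> \<le> Suc (hamming (flip x t) y)"
      using adj[OF flip.prems x'] flip.IH[OF x'] by simp
    moreover have "hamming (flip x t) y < hamming x y"
      using flip.hyps by (metis card_Diff1_less symdiff_flip_mem)
    ultimately show ?case
      by linarith
  qed simp
qed

lemma card_Pow_slice:
  assumes "finite I" "K \<subseteq> I" "s \<subseteq> K"
  shows "card {x. x \<subseteq> I \<and> x \<inter> K = s} = 2 ^ (card I - card K)"
proof -
  have "bij_betw (\<lambda>y. y \<union> s) (Pow (I - K)) {x. x \<subseteq> I \<and> x \<inter> K = s}"
    unfolding bij_betw_def inj_on_def
  proof (intro conjI ballI impI equalityI subsetI)
    fix x assume "x \<in> {x. x \<subseteq> I \<and> x \<inter> K = s}"
    then have "x = (x - K) \<union> s" "x - K \<in> Pow (I - K)" by auto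
    then show "x \<in> (\<lambda>y. y \<union> s) ` Pow (I - K)" by blast
  qed (use assms in auto)
  then have "card {x. x \<subseteq> I \<and> x \<inter> K = s} = card (Pow (I - K))"
    by (simp add: bij_betw_same_card)
  also have "\<dots> = 2 ^ (card I - card K)"
    using assms by (simp add: card_Pow card_Diff_subset finite_subset)
  finally show ?thesis .
qed

locale cube_graph =
  fixes V :: "'v set" and E :: "'v \<Rightarrow> 'v \<Rightarrow> bool"
begin

text \<open>A chart of a cube, as in \<^const>\<open>cube_param\<close> but with an arbitrary finite set of
  coordinates; the coordinate faces of a chart are the facets of the cube.\<close>

definition cube_chart :: "nat set \<Rightarrow> (nat set \<Rightarrow> 'v) \<Rightarrow> 'v set \<Rightarrow> bool" where
  "cube_chart I f C \<longleftrightarrow> finite I \<and> C \<subseteq> V \<and> bij_betw f (Pow I) C \<and>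
     (\<forall>x y. x \<subseteq> I \<longrightarrow> y \<subseteq> I \<longrightarrow> (E (f x) (f y) \<longleftrightarrow> hamming x y = 1))"

definition coord_face :: "(nat set \<Rightarrow> 'v) \<Rightarrow> nat set \<Rightarrow> nat \<Rightarrow> bool \<Rightarrow> 'v set" where
  "coord_face f I i b = f ` {x. x \<subseteq> I \<and> (i \<in> x \<longleftrightarrow> b)}"

lemma cube_param_iff_chart: "cube_param V E k f C \<longleftrightarrow> cube_chart {..<k} f C"
  unfolding cube_param_def cube_chart_def Pow_def by auto

context
  fixes I f C
  assumes chart: "cube_chart I f C"
begin

lemma chart_finite: "finite I"
  and chart_subset: "C \<subseteq> V"
  and chart_image: "C = f ` Pow I"
  using chart by (auto simp: cube_chart_def bij_betw_def)

lemma chart_adj: "x \<subseteq> I \<Longrightarrow> y \<subseteq> I \<Longrightarrow> E (f x) (f y) \<longleftrightarrow> hamming x y = 1"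
  using chart by (simp add: cube_chart_def)

lemma chart_inj: "x \<subseteq> I \<Longrightarrow> y \<subseteq> I \<Longrightarrow> f x = f y \<longleftrightarrow> x = y"
  using chart unfolding cube_chart_def bij_betw_def inj_on_def by blast

lemma chart_mem: "x \<subseteq> I \<Longrightarrow> f x \<in> C"
  using chart_image by blast

lemma chart_card: "card C = 2 ^ card I"
  using chart chart_finite unfolding cube_chart_def by (metis bij_betw_same_card card_Pow)

lemma chart_slice_card:
  assumes "K \<subseteq> I" "s \<subseteq> K"
  shows "card (f ` {x. x \<subseteq> I \<and> x \<inter> K = s}) = 2 ^ (card I - card K)"
proof -
  have "inj_on f {x. x \<subseteq> I \<and> x \<inter> K = s}"
    using chart_inj by (auto simp: inj_on_def)
  then show ?thesis
    using card_Pow_slice[OF chart_finite assms] by (simp add: card_image)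
qed

lemma coord_face_card:
  assumes "i \<in> I"
  shows "card (coord_face f I i b) = 2 ^ (card I - 1)"
proof -
  have "{x. x \<subseteq> I \<and> (i \<in> x \<longleftrightarrow> b)} = {x. x \<subseteq> I \<and> x \<inter> {i} = (if b then {i} else {})}"
    by auto
  then show ?thesis
    using chart_slice_card[of "{i}" "if b then {i} else {}"] assms by (simp add: coord_face_def)
qed

lemma coord_face_subset: "coord_face f I i b \<subseteq> C"
  unfolding coord_face_def using chart_image by blast

lemma coord_faces_disjoint: "b \<noteq> c \<Longrightarrow> coord_face f I i b \<inter> coord_face f I i c = {}"
  unfolding coord_face_def using chart_inj by blast

lemma coord_faces_inter_card:
  assumes "i \<in> I" "j \<in> I" "i \<noteq> j"
  shows "card (coord_face f I i b \<inter> coord_face f I j c) = 2 ^ (card I - 2)"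
proof -
  have "coord_face f I i b \<inter> coord_face f I j c = f ` {x. x \<subseteq> I \<and> (i \<in> x \<longleftrightarrow> b) \<and> (j \<in> x \<longleftrightarrow> c)}"
    unfolding coord_face_def using chart_inj by blast
  also have "{x. x \<subseteq> I \<and> (i \<in> x \<longleftrightarrow> b) \<and> (j \<in> x \<longleftrightarrow> c)} =
      {x. x \<subseteq> I \<and> x \<inter> {i, j} = (if b then {i} else {}) \<union> (if c then {j} else {})}"
    using assms(3) by (cases b; cases c) auto
  finally show ?thesis
    using chart_slice_card[of "{i, j}"] assms by simp
qed

lemma chart_slice:
  assumes "J \<subseteq> I" "s \<subseteq> I - J"
  shows "cube_chart J (\<lambda>y. f (y \<union> s)) (f ` (\<lambda>y. y \<union> s) ` Pow J)"
  unfolding cube_chart_def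
proof (intro conjI allI impI)
  show "finite J"
    using chart_finite assms finite_subset by blast
  have sub: "(\<lambda>y. y \<union> s) ` Pow J \<subseteq> Pow I"
    using assms by auto
  then show "f ` (\<lambda>y. y \<union> s) ` Pow J \<subseteq> V"
    using chart_subset chart_image by blast
  have "inj_on (\<lambda>y. f (y \<union> s)) (Pow J)"
  proof (rule inj_onI)
    fix x y assume "x \<in> Pow J" "y \<in> Pow J" "f (x \<union> s) = f (y \<union> s)"
    moreover have "x \<union> s \<subseteq> I" "y \<union> s \<subseteq> I"
      using calculation assms by auto
    ultimately have "x \<union> s = y \<union> s"
      using chart_inj by blast
    then show "x = y"
      using \<open>x \<in> Pow J\<close> \<open>y \<in> Pow J\<close> assms by blast
  qed
  then show "bij_betw (\<lambda>y. f (y \<union> s)) (Pow J) (f ` (\<lambda>y. y \<union> s) ` Pow J)"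
    by (simp add: bij_betw_def image_image)
next
  fix x y assume "x \<subseteq> J" "y \<subseteq> J"
  moreover have "symdiff (x \<union> s) (y \<union> s) = symdiff x y" "x \<union> s \<subseteq> I" "y \<union> s \<subseteq> I"
    using calculation assms by auto
  ultimately show "E (f (x \<union> s)) (f (y \<union> s)) \<longleftrightarrow> hamming x y = 1"
    using chart_adj by simp
qed

end

lemma chart_transition:
  assumes f: "cube_chart I f C" and g: "cube_chart J g C"
  obtains \<sigma> where "\<And>u. u \<subseteq> J \<Longrightarrow> \<sigma> u \<subseteq> I \<and> f (\<sigma> u) = g u"
    and "\<And>x. x \<subseteq> I \<Longrightarrow> \<exists>u\<subseteq>J. \<sigma> u = x"
    and "\<And>u u'. u \<subseteq> J \<Longrightarrow> u' \<subseteq> J \<Longrightarrow> hamming (\<sigma> u) (\<sigma> u') = hamming u u'"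
proof -
  define \<sigma> where "\<sigma> u = inv_into (Pow I) f (g u)" for u
  define \<tau> where "\<tau> x = inv_into (Pow J) g (f x)" for x
  have \<sigma>: "\<sigma> u \<subseteq> I \<and> f (\<sigma> u) = g u" if "u \<subseteq> J" for u
  proof -
    have "g u \<in> f ` Pow I"
      using that chart_image[OF f] chart_image[OF g] by blast
    then show ?thesis
      unfolding \<sigma>_def by (simp add: f_inv_into_f) (meson PowD inv_into_into)
  qed
  have \<tau>: "\<tau> x \<subseteq> J \<and> g (\<tau> x) = f x" if "x \<subseteq> I" for x
  proof -
    have "f x \<in> g ` Pow J"
      using that chart_image[OF f] chart_image[OF g] by blast
    then show ?thesis
      unfolding \<tau>_def by (simp add: f_inv_into_f) (meson PowD inv_into_into)
  qed
  have \<tau>\<sigma>: "\<tau> (\<sigma> u) = u" if "u \<subseteq> J" for u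
    using \<sigma>[OF that] \<tau>[of "\<sigma> u"] chart_inj[OF g, of "\<tau> (\<sigma> u)" u] that by auto
  have \<sigma>\<tau>: "\<sigma> (\<tau> x) = x" if "x \<subseteq> I" for x
    using \<tau>[OF that] \<sigma>[of "\<tau> x"] chart_inj[OF f, of "\<sigma> (\<tau> x)" x] that by auto
  have adj_\<sigma>: "hamming (\<sigma> u) (\<sigma> u') = 1" if "u \<subseteq> J" "u' \<subseteq> J" "hamming u u' = 1" for u u'
    using chart_adj[OF f, of "\<sigma> u" "\<sigma> u'"] chart_adj[OF g that(1,2)] \<sigma>[OF that(1)] \<sigma>[OF that(2)] that(3)
    by simp
  have adj_\<tau>: "hamming (\<tau> x) (\<tau> x') = 1" if "x \<subseteq> I" "x' \<subseteq> I" "hamming x x' = 1" for x x'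
    using chart_adj[OF g, of "\<tau> x" "\<tau> x'"] chart_adj[OF f that(1,2)] \<tau>[OF that(1)] \<tau>[OF that(2)] that(3)
    by simp
  have \<sigma>_le: "hamming (\<sigma> u) (\<sigma> u') \<le> hamming u u'" if "u \<subseteq> J" "u' \<subseteq> J" for u u'
    by (rule hamming_nonexpanding[OF chart_finite[OF g] chart_finite[OF f]]) (use \<sigma> adj_\<sigma> that in auto)
  have \<tau>_le: "hamming (\<tau> x) (\<tau> x') \<le> hamming x x'" if "x \<subseteq> I" "x' \<subseteq> I" for x x'
    by (rule hamming_nonexpanding[OF chart_finite[OF f] chart_finite[OF g]]) (use \<tau> adj_\<tau> that in auto)
  show ?thesis
  proof (rule that)
    show "hamming (\<sigma> u) (\<sigma> u') = hamming u u'" if "u \<subseteq> J" "u' \<subseteq> J" for u u'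
      using \<sigma>_le[OF that] \<tau>_le[of "\<sigma> u" "\<sigma> u'"] \<sigma> \<tau>\<sigma> that by (metis antisym)
  qed (use \<sigma> in blast, use \<sigma>\<tau> \<tau> in metis)
qed

lemma coord_face_other_chart:
  assumes f: "cube_chart I f C" and g: "cube_chart J g C" and j: "j \<in> J"
  obtains i b where "i \<in> I" "coord_face g J j c = coord_face f I i b"
proof -
  obtain \<sigma> where \<sigma>: "\<And>u. u \<subseteq> J \<Longrightarrow> \<sigma> u \<subseteq> I \<and> f (\<sigma> u) = g u"
    and onto: "\<And>x. x \<subseteq> I \<Longrightarrow> \<exists>u\<subseteq>J. \<sigma> u = x"
    and iso: "\<And>u u'. u \<subseteq> J \<Longrightarrow> u' \<subseteq> J \<Longrightarrow> hamming (\<sigma> u) (\<sigma> u') = hamming u u'"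
    using chart_transition[OF f g] by blast
  define u0 where "u0 = (if c then {j} else {})"
  have u0: "u0 \<subseteq> J" "flip u0 j \<subseteq> J" "j \<in> u0 \<longleftrightarrow> c"
    using j by (auto simp: u0_def flip_def)
  then have "hamming (\<sigma> u0) (\<sigma> (flip u0 j)) = 1"
    using iso by simp
  then obtain i where i: "\<sigma> (flip u0 j) = flip (\<sigma> u0) i" "i \<in> symdiff (\<sigma> u0) (\<sigma> (flip u0 j))"
    by (rule hamming_eq_1_flip)
  have "i \<in> I" using i(2) \<sigma> u0 by blast
  define b where "b = (i \<in> \<sigma> u0)"
  have fin: "finite (symdiff u u0)" "finite (symdiff (\<sigma> u) (\<sigma> u0))" if "u \<subseteq> J" for u
    using that u0 \<sigma> chart_finite[OF f] chart_finite[OF g] by (meson finite_Diff finite_UnI finite_subset)+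
  have same_side: "(j \<in> u \<longleftrightarrow> c) \<longleftrightarrow> (i \<in> \<sigma> u \<longleftrightarrow> b)" if u: "u \<subseteq> J" for u
  proof -
    have "(j \<in> u \<longleftrightarrow> c) \<longleftrightarrow> hamming u u0 < hamming u (flip u0 j)"
      using hamming_less_flip_iff[OF fin(1)[OF u]] u0(3) by simp
    also have "\<dots> \<longleftrightarrow> hamming (\<sigma> u) (\<sigma> u0) < hamming (\<sigma> u) (\<sigma> (flip u0 j))"
      using iso u u0 by simp
    also have "\<dots> \<longleftrightarrow> (i \<in> \<sigma> u \<longleftrightarrow> b)"
      using hamming_less_flip_iff[OF fin(2)[OF u]] i(1) by (simp add: b_def)
    finally show ?thesis .
  qed
  have "coord_face g J j c = coord_face f I i b"
    unfolding coord_face_def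
  proof (intro equalityI subsetI)
    fix v assume "v \<in> g ` {u. u \<subseteq> J \<and> (j \<in> u \<longleftrightarrow> c)}"
    then obtain u where "u \<subseteq> J" "j \<in> u \<longleftrightarrow> c" "v = g u" by blast
    then show "v \<in> f ` {x. x \<subseteq> I \<and> (i \<in> x \<longleftrightarrow> b)}"
      using \<sigma> same_side by (intro image_eqI[of _ _ "\<sigma> u"]) auto
  next
    fix v assume "v \<in> f ` {x. x \<subseteq> I \<and> (i \<in> x \<longleftrightarrow> b)}"
    then obtain x where "x \<subseteq> I" "i \<in> x \<longleftrightarrow> b" "v = f x" by blast
    moreover obtain u where "u \<subseteq> J" "\<sigma> u = x"
      using onto calculation by blast
    ultimately show "v \<in> g ` {u. u \<subseteq> J \<and> (j \<in> u \<longleftrightarrow> c)}"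
      using \<sigma> same_side by (intro image_eqI[of _ _ u]) auto
  qed
  with \<open>i \<in> I\<close> that show ?thesis by blast
qed

lemma chart_reindex:
  assumes chart: "cube_chart I f C" and h: "bij_betw h J I"
  shows "cube_chart J (\<lambda>x. f (h ` x)) C"
  unfolding cube_chart_def
proof (intro conjI allI impI)
  show "finite J"
    using bij_betw_finite[OF h] chart_finite[OF chart] by simp
  show "C \<subseteq> V"
    using chart_subset[OF chart] .
  have "bij_betw f (Pow I) C"
    using chart by (simp add: cube_chart_def)
  from bij_betw_trans[OF bij_betw_Pow[OF h] this]
  show "bij_betw (\<lambda>x. f (h ` x)) (Pow J) C"
    by (simp add: comp_def)
next
  fix x y assume "x \<subseteq> J" "y \<subseteq> J"
  have inj: "inj_on h J"
    using h by (simp add: bij_betw_def)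
  have "h ` (x - y) = h ` x - h ` y" "h ` (y - x) = h ` y - h ` x"
    by (intro inj_on_image_set_diff[OF inj]; use \<open>x \<subseteq> J\<close> \<open>y \<subseteq> J\<close> in blast)+
  then have "symdiff (h ` x) (h ` y) = h ` symdiff x y"
    by (simp add: image_Un)
  moreover have "inj_on h (symdiff x y)"
    by (rule inj_on_subset[OF inj]) (use \<open>x \<subseteq> J\<close> \<open>y \<subseteq> J\<close> in auto)
  ultimately have "hamming (h ` x) (h ` y) = hamming x y"
    by (simp add: card_image)
  moreover have "h ` x \<subseteq> I" "h ` y \<subseteq> I"
    using \<open>x \<subseteq> J\<close> \<open>y \<subseteq> J\<close> h by (auto simp: bij_betw_def)
  ultimately show "E (f (h ` x)) (f (h ` y)) \<longleftrightarrow> hamming x y = 1"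
    using chart_adj[OF chart] by simp
qed

lemma coord_face_reindex:
  assumes h: "bij_betw h J I" and j: "j \<in> J"
  shows "coord_face (\<lambda>x. f (h ` x)) J j b = coord_face f I (h j) b"
proof -
  have "{x. x \<subseteq> I \<and> (h j \<in> x \<longleftrightarrow> b)} = (`) h ` {y. y \<subseteq> J \<and> (j \<in> y \<longleftrightarrow> b)}"
  proof (intro equalityI subsetI)
    fix x assume x: "x \<in> {x. x \<subseteq> I \<and> (h j \<in> x \<longleftrightarrow> b)}"
    then obtain y where "y \<subseteq> J" "x = h ` y"
      using h by (metis (no_types, lifting) mem_Collect_eq bij_betw_def subset_image_iff)
    moreover have "h j \<in> h ` y \<longleftrightarrow> j \<in> y"
      using h j calculation by (auto simp: bij_betw_def inj_on_def)
    ultimately show "x \<in> (`) h ` {y. y \<subseteq> J \<and> (j \<in> y \<longleftrightarrow> b)}"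
      using x by auto
  qed (use h j in \<open>auto simp: bij_betw_def inj_on_def\<close>)
  then show ?thesis
    by (simp add: coord_face_def image_image)
qed

lemma facet_of_chart:
  assumes chart: "cube_chart I f C" and i: "i \<in> I"
  shows "is_facet V E (coord_face f I i b) C"
proof -
  obtain h where h: "bij_betw h {..<card I} I"
    using ex_bij_betw_nat_finite[OF chart_finite[OF chart]] by (auto simp: atLeast0LessThan)
  define j where "j = inv_into {..<card I} h i"
  have j: "j < card I" "h j = i"
    using h i inv_into_into[of i h "{..<card I}"] f_inv_into_f[of i h] by (auto simp: j_def bij_betw_def)
  have "cube_param V E (card I) (\<lambda>x. f (h ` x)) C"
    using chart_reindex[OF chart h] by (simp add: cube_param_iff_chart)
  moreover have "coord_face f I i b = (\<lambda>x. f (h ` x)) ` {x. x \<subseteq> {..<card I} \<and> (j \<in> x \<longleftrightarrow> b)}"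
    using coord_face_reindex[OF h, of j f b] j by (simp add: coord_face_def)
  ultimately show ?thesis
    unfolding is_facet_def using j by blast
qed

lemma facet_chartE:
  assumes "is_facet V E D C"
  obtains I f i b where "cube_chart I f C" "i \<in> I" "D = coord_face f I i b"
proof -
  obtain k f i b where "cube_param V E k f C" "i < k" "D = f ` {x. x \<subseteq> {..<k} \<and> (i \<in> x \<longleftrightarrow> b)}"
    using assms unfolding is_facet_def by blast
  then show ?thesis
    using that[of "{..<k}" f i b] by (simp add: cube_param_iff_chart coord_face_def)
qed

lemma facet_in_chart:
  assumes "cube_chart I f C" "is_facet V E D C"
  obtains i b where "i \<in> I" "D = coord_face f I i b"
proof -
  obtain J g j c where g: "cube_chart J g C" and j: "j \<in> J" and D: "D = coord_face g J j c"
    using assms(2) by (rule facet_chartE)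
  obtain i b where "i \<in> I" "coord_face g J j c = coord_face f I i b"
    using coord_face_other_chart[OF assms(1) g j] .
  with D that show ?thesis by blast
qed

lemma facet_card:
  assumes "is_facet V E D C"
  shows "card C = 2 * card D" "card D > 0" "D \<subseteq> C" "finite C" "C \<subseteq> V"
proof -
  obtain I f i b where chart: "cube_chart I f C" and i: "i \<in> I" and D: "D = coord_face f I i b"
    using assms by (rule facet_chartE)
  obtain n where n: "card I = Suc n"
    using i chart_finite[OF chart] by (metis card_gt_0_iff empty_iff gr0_implies_Suc)
  then show "card C = 2 * card D" "card D > 0"
    using chart_card[OF chart] coord_face_card[OF chart i, of b] D by simp_all
  show "D \<subseteq> C" "C \<subseteq> V"
    using coord_face_subset[OF chart] chart_subset[OF chart] D by auto
  show "finite C"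
    using chart_image[OF chart] chart_finite[OF chart] by simp
qed

lemma facet_pair_eq:
  assumes "is_facet V E D C" "is_facet V E D' C'" "{C, D} = {C', D'}"
  shows "C = C'" "D = D'"
proof -
  have "\<not> (C = D' \<and> D = C')"
    using facet_card(1,2)[OF assms(1)] facet_card(1)[OF assms(2)] by auto
  then show "C = C'" "D = D'"
    using assms(3) by (auto simp: doubleton_eq_iff)
qed

end

definition parallel :: "('w \<Rightarrow> 'w \<Rightarrow> bool) \<Rightarrow> ('w set \<times> 'w set) set" where
  "parallel R = {(x, y). square_opp R x y}"

definition hyperplane_of :: "('w \<Rightarrow> 'w \<Rightarrow> bool) \<Rightarrow> 'w set \<Rightarrow> 'w set set" where
  "hyperplane_of R e = {e'. (e, e') \<in> (parallel R)\<^sup>*}"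

lemma hyperplanes_eq: "hyperplanes R = hyperplane_of R ` edges R"
  by (simp add: hyperplanes_def hyperplane_of_def parallel_def)

lemma parallelI:
  "R a b \<Longrightarrow> R b c \<Longrightarrow> R c d \<Longrightarrow> R d a \<Longrightarrow> distinct [a, b, c, d] \<Longrightarrow> ({a, b}, {d, c}) \<in> parallel R"
  unfolding parallel_def square_opp_def by blast

lemma parallelE:
  assumes "(x, y) \<in> parallel R"
  obtains a b c d where "R a b" "R b c" "R c d" "R d a" "distinct [a, b, c, d]" "x = {a, b}" "y = {d, c}"
  using assms unfolding parallel_def square_opp_def by blast

lemma parallel_sym:
  assumes sym: "\<And>u v. R u v \<Longrightarrow> R v u" and "(x, y) \<in> parallel R"
  shows "(y, x) \<in> parallel R"
proof -
  obtain a b c d where "R a b" "R b c" "R c d" "R d a" "distinct [a, b, c, d]" "x = {a, b}" "y = {d, c}"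
    using assms(2) by (rule parallelE)
  then show ?thesis
    using parallelI[of R d c b a] sym by auto
qed

lemma rtrancl_parallel_sym:
  assumes sym: "\<And>u v. R u v \<Longrightarrow> R v u" and "(x, y) \<in> (parallel R)\<^sup>*"
  shows "(y, x) \<in> (parallel R)\<^sup>*"
  using assms(2)
proof (induction rule: rtrancl_induct)
  case (step y z)
  then show ?case
    using parallel_sym[OF sym step(2)] by (simp add: converse_rtrancl_into_rtrancl)
qed simp

lemma hyperplane_of_closed:
  "e \<in> hyperplane_of R e0 \<Longrightarrow> (e, e') \<in> (parallel R)\<^sup>* \<Longrightarrow> e' \<in> hyperplane_of R e0"
  unfolding hyperplane_of_def using rtrancl_trans[of e0 e] by blast

lemma hyperplane_of_eq:
  assumes sym: "\<And>u v. R u v \<Longrightarrow> R v u" and "e' \<in> hyperplane_of R e"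
  shows "hyperplane_of R e' = hyperplane_of R e"
proof (intro equalityI subsetI)
  fix x assume "x \<in> hyperplane_of R e'"
  then show "x \<in> hyperplane_of R e"
    using assms(2) hyperplane_of_closed unfolding hyperplane_of_def by blast
next
  fix x assume "x \<in> hyperplane_of R e"
  moreover have "(e', e) \<in> (parallel R)\<^sup>*"
    using assms(2) rtrancl_parallel_sym[of R, OF sym] unfolding hyperplane_of_def by blast
  ultimately show "x \<in> hyperplane_of R e'"
    unfolding hyperplane_of_def using rtrancl_trans[of e' e] by blast
qed

lemma hyperplane_of_subset:
  assumes "\<And>u v. R u v \<Longrightarrow> u \<in> M \<and> v \<in> M" "x \<subseteq> M"
  shows "hyperplane_of R x \<subseteq> Pow M"
proof
  fix y assume "y \<in> hyperplane_of R x"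
  then have "(x, y) \<in> (parallel R)\<^sup>*"
    by (simp add: hyperplane_of_def)
  then show "y \<in> Pow M"
  proof (induction rule: rtrancl_induct)
    case (step y z)
    then show ?case
      using assms(1) by (auto elim!: parallelE)
  qed (use assms(2) in simp)
qed

lemma parallel_image:
  assumes "inj_on f M" and in_M: "\<And>u v. R u v \<Longrightarrow> u \<in> M \<and> v \<in> M"
    and preserves: "\<And>u v. R u v \<Longrightarrow> R (f u) (f v)" and "(x, y) \<in> parallel R"
  shows "(f ` x, f ` y) \<in> parallel R"
proof -
  obtain a b c d where sq: "R a b" "R b c" "R c d" "R d a" "distinct [a, b, c, d]" "x = {a, b}" "y = {d, c}"
    using assms(4) by (rule parallelE)
  moreover have "a \<in> M" "b \<in> M" "c \<in> M" "d \<in> M"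
    using in_M sq(1,3) by blast+
  ultimately have "distinct [f a, f b, f c, f d]"
    by (simp add: inj_on_eq_iff[OF assms(1)])
  then show ?thesis
    using parallelI[of R, OF preserves[OF sq(1)] preserves[OF sq(2)] preserves[OF sq(3)] preserves[OF sq(4)]]
      sq(6,7) by simp
qed

context cube_graph
begin

text \<open>The edges of \<open>C\<close> leaving its facet \<open>D\<close>; in the subdivision, the edge from the
  barycentre of \<open>D\<close> to that of \<open>C\<close> is parallel to them.\<close>

definition dual_edges :: "'v set \<Rightarrow> 'v set \<Rightarrow> 'v set set" where
  "dual_edges D C = {{p, q} | p q. p \<in> D \<and> q \<in> C - D \<and> E p q}"

lemma dual_edge_in_chart:
  assumes chart: "cube_chart I f C" and i: "i \<in> I"
    and "p \<in> coord_face f I i b" "q \<in> C - coord_face f I i b" "E p q"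
  obtains x where "x \<subseteq> I" "p = f x" "q = f (flip x i)"
proof -
  obtain x where x: "x \<subseteq> I" "i \<in> x \<longleftrightarrow> b" "p = f x"
    using assms(3) unfolding coord_face_def by blast
  obtain z where z: "z \<subseteq> I" "q = f z" "\<not> (i \<in> z \<longleftrightarrow> b)"
    using assms(4) chart_image[OF chart] unfolding coord_face_def by blast
  have "hamming x z = 1"
    using chart_adj[OF chart x(1) z(1)] assms(5) x z by simp
  then obtain t where "z = flip x t"
    by (rule hamming_eq_1_flip)
  moreover from this have "t = i"
    using x(2) z(3) by (auto simp: mem_flip)
  ultimately show ?thesis
    using that x z by blast
qed

lemma chart_square:
  assumes chart: "cube_chart I f C" and "i \<in> I" "j \<in> I" "j \<noteq> i" "x \<subseteq> I"
  shows "({f x, f (flip x i)}, {f (flip x j), f (flip (flip x j) i)}) \<in> parallel E"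
proof -
  have sub: "flip x i \<subseteq> I" "flip (flip x i) j \<subseteq> I" "flip x j \<subseteq> I"
    using assms by (simp_all add: flip_subset)
  have "E (f x) (f (flip x i))" "E (f (flip x i)) (f (flip (flip x i) j))" "E (f (flip x j)) (f x)"
    using chart_adj[OF chart] assms sub by simp_all
  moreover have "E (f (flip (flip x i) j)) (f (flip x j))"
    using chart_adj[OF chart] assms sub by (simp add: flip_commute[of x i j])
  moreover have "distinct [x, flip x i, flip (flip x i) j, flip x j]"
    using flip_neq[of x i] flip_neq[of x j] flip_neq[of "flip x i" j] flip_neq[of "flip x j" i]
      flip_flip_neq[of i j x] flip_inj[of x i j] flip_commute[of x i j] assms(4) by auto
  then have "distinct [f x, f (flip x i), f (flip (flip x i) j), f (flip x j)]"
    using chart_inj[OF chart] assms sub by simp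
  ultimately show ?thesis
    using parallelI[of E] by (simp add: flip_commute[of x i j])
qed

lemma chart_edges_parallel:
  assumes chart: "cube_chart I f C" and i: "i \<in> I" and "x \<subseteq> I" "y \<subseteq> I"
  shows "({f x, f (flip x i)}, {f y, f (flip y i)}) \<in> (parallel E)\<^sup>*"
proof -
  have "finite (symdiff x y)"
    using chart_finite[OF chart] assms by (meson finite_Diff finite_UnI finite_subset)
  then show ?thesis
    using \<open>x \<subseteq> I\<close>
  proof (induction x rule: symdiff_induct)
    case (flip x t)
    then have x': "flip x t \<subseteq> I"
      using \<open>y \<subseteq> I\<close> by (intro flip_subset) auto
    show ?case
    proof (cases "t = i")
      case True
      then show ?thesis
        using flip.IH[OF x'] by (simp add: insert_commute)
    next
      case False
      have "t \<in> I"
        using flip.hyps flip.prems \<open>y \<subseteq> I\<close> by auto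
      then have "({f x, f (flip x i)}, {f (flip x t), f (flip (flip x t) i)}) \<in> parallel E"
        using chart_square[OF chart i _ False flip.prems] by blast
      then show ?thesis
        using flip.IH[OF x'] by (rule converse_rtrancl_into_rtrancl)
    qed
  qed simp
qed

lemma dual_edges_parallel:
  assumes facet: "is_facet V E D C" and "e \<in> dual_edges D C" "e' \<in> dual_edges D C"
  shows "(e, e') \<in> (parallel E)\<^sup>*"
proof -
  obtain I f i b where chart: "cube_chart I f C" and i: "i \<in> I" and D: "D = coord_face f I i b"
    using facet by (rule facet_chartE)
  obtain p q p' q' where "e = {p, q}" "p \<in> D" "q \<in> C - D" "E p q"
    and "e' = {p', q'}" "p' \<in> D" "q' \<in> C - D" "E p' q'"
    using assms(2,3) unfolding dual_edges_def by blast
  moreover obtain x where "x \<subseteq> I" "p = f x" "q = f (flip x i)"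
    using dual_edge_in_chart[OF chart i, of p b q] calculation D by blast
  moreover obtain y where "y \<subseteq> I" "p' = f y" "q' = f (flip y i)"
    using dual_edge_in_chart[OF chart i, of p' b q'] calculation D by blast
  ultimately show ?thesis
    using chart_edges_parallel[OF chart i] by simp
qed

lemma dual_edges_nonempty:
  assumes "is_facet V E D C"
  shows "dual_edges D C \<noteq> {}"
proof -
  obtain I f i b where chart: "cube_chart I f C" and i: "i \<in> I" and D: "D = coord_face f I i b"
    using assms by (rule facet_chartE)
  define x where "x = (if b then {i} else {})"
  have x: "x \<subseteq> I" "flip x i \<subseteq> I" "i \<in> x \<longleftrightarrow> b"
    using i by (auto simp: x_def flip_def)
  have "f x \<in> D" "f (flip x i) \<in> C"
    using x D chart_mem[OF chart] unfolding coord_face_def by auto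
  moreover have "f (flip x i) \<notin> D"
    using x D chart_inj[OF chart] unfolding coord_face_def by (auto simp: mem_flip)
  moreover have "E (f x) (f (flip x i))"
    using chart_adj[OF chart x(1,2)] by simp
  ultimately show ?thesis
    unfolding dual_edges_def by blast
qed

text \<open>A square of the subdivision whose barycentres have dimensions \<open>k, k+1, k+2, k+1\<close>.\<close>

definition chain_square :: "'v set \<Rightarrow> 'v set \<Rightarrow> 'v set \<Rightarrow> 'v set \<Rightarrow> bool" where
  "chain_square B M T M' \<longleftrightarrow> is_facet V E B M \<and> is_facet V E M T \<and> is_facet V E B M' \<and>
     is_facet V E M' T \<and> M \<noteq> M'"

lemma chain_square_sym: "chain_square B M T M' \<longleftrightarrow> chain_square B M' T M"
  unfolding chain_square_def by auto

lemma chain_square_inter: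
  assumes "chain_square B M T M'"
  shows "B = M \<inter> M'"
proof -
  have BM: "is_facet V E B M" and MT: "is_facet V E M T" and BM': "is_facet V E B M'"
    and M'T: "is_facet V E M' T" and "M \<noteq> M'"
    using assms by (simp_all add: chain_square_def)
  obtain I f i b where chart: "cube_chart I f T" and i: "i \<in> I" and M: "M = coord_face f I i b"
    using MT by (rule facet_chartE)
  obtain i' b' where i': "i' \<in> I" and M': "M' = coord_face f I i' b'"
    using facet_in_chart[OF chart M'T] .
  have B: "B \<subseteq> M \<inter> M'" "card B > 0"
    using facet_card(3)[OF BM] facet_card(3)[OF BM'] facet_card(2)[OF BM] by simp_all
  have "i \<noteq> i'"
  proof
    assume "i = i'"
    moreover have "b \<noteq> b'"
    proof
      assume "b = b'"
      with \<open>i = i'\<close> have "M = M'"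
        using M M' by simp
      with \<open>M \<noteq> M'\<close> show False ..
    qed
    ultimately have "M \<inter> M' = {}"
      using coord_faces_disjoint[OF chart] M M' by simp
    with B show False by simp
  qed
  then have "card {i, i'} \<le> card I"
    using i i' chart_finite[OF chart] by (intro card_mono) auto
  then have "2 \<le> card I"
    using \<open>i \<noteq> i'\<close> by simp
  then obtain n where n: "card I = Suc (Suc n)"
    by (metis add_2_eq_Suc le_Suc_ex)
  have "card (M \<inter> M') = 2 ^ n"
    using coord_faces_inter_card[OF chart i i' \<open>i \<noteq> i'\<close>] M M' n by simp
  moreover have "card B = 2 ^ n"
    using facet_card(1)[OF BM] facet_card(1)[OF MT] chart_card[OF chart] n by simp
  moreover have "finite (M \<inter> M')"
    using facet_card(3,4)[OF MT] finite_subset by blast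
  ultimately show ?thesis
    using card_subset_eq[OF _ B(1)] by simp
qed

lemma dual_edges_chain_square:
  assumes "chain_square B M T M'"
  shows "dual_edges B M \<subseteq> dual_edges M' T"
proof -
  have "B = M \<inter> M'" "M \<subseteq> T"
    using chain_square_inter[OF assms] facet_card(3) assms unfolding chain_square_def by blast+
  then show ?thesis
    unfolding dual_edges_def by blast
qed

lemma chain_square_parallel:
  assumes "chain_square B M T M'"
  shows "({M, B}, {T, M'}) \<in> parallel (subdiv_adj V E)"
proof -
  have facets: "is_facet V E B M" "is_facet V E M T" "is_facet V E B M'" "is_facet V E M' T"
    and "M \<noteq> M'"
    using assms by (simp_all add: chain_square_def)
  have "card M = 2 * card B" "card T = 2 * card M" "card T = 2 * card M'" "card B > 0"
    using facet_card(1,2) facets by simp_all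
  then have "distinct [M, B, M', T]"
    using \<open>M \<noteq> M'\<close> by auto
  then show ?thesis
    using parallelI[of "subdiv_adj V E" M B M' T] facets by (simp add: subdiv_adj_def)
qed

end

context cube_graph
begin

lemma chart_common_neighbour:
  assumes chart: "cube_chart J h T" and "r \<in> T" "p \<in> T" "q \<in> T" "E r p" "E r q" "p \<noteq> q"
  obtains w where "w \<in> T" "E w p" "E w q" "w \<noteq> r"
proof -
  obtain u y z where u: "u \<subseteq> J" "r = h u" and y: "y \<subseteq> J" "p = h y" and z: "z \<subseteq> J" "q = h z"
    using assms(2-4) chart_image[OF chart] by blast
  obtain a where a: "y = flip u a" "a \<in> symdiff u y"
    using chart_adj[OF chart u(1) y(1)] assms(5) u y hamming_eq_1_flip by metis
  obtain a' where a': "z = flip u a'" "a' \<in> symdiff u z"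
    using chart_adj[OF chart u(1) z(1)] assms(6) u z hamming_eq_1_flip by metis
  have "a \<in> J" "a' \<in> J"
    using a(2) a'(2) u(1) y(1) z(1) by blast+
  moreover have "a \<noteq> a'"
    using a(1) a'(1) y z \<open>p \<noteq> q\<close> by auto
  ultimately
  have sub: "flip (flip u a) a' \<subseteq> J" "flip u a \<subseteq> J" "flip u a' \<subseteq> J"
    using u(1) by (simp_all add: flip_subset)
  show ?thesis
  proof (rule that)
    show "h (flip (flip u a) a') \<in> T"
      using chart_mem[OF chart sub(1)] .
    show "E (h (flip (flip u a) a')) p"
      using chart_adj[OF chart] sub a y by simp
    show "E (h (flip (flip u a) a')) q"
      using chart_adj[OF chart] sub a' z by (simp add: flip_commute[of u a a'])
    show "h (flip (flip u a) a') \<noteq> r"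
      using chart_inj[OF chart sub(1) u(1)] flip_flip_neq[OF \<open>a \<noteq> a'\<close>] u by simp
  qed
qed

lemma chart_vertex_off_two_faces:
  assumes chart: "cube_chart I f C" and "i \<in> I" "j \<in> I" "i \<noteq> j"
    and w: "w \<in> C" "w \<notin> coord_face f I i b" "w \<notin> coord_face f I j c"
  obtains p q r where "p \<in> coord_face f I i b" "q \<in> coord_face f I j c"
    "r \<in> coord_face f I i b \<inter> coord_face f I j c"
    "E w p" "E w q" "E r p" "E r q" "p \<noteq> q" "\<not> E p q"
proof -
  obtain x where x: "x \<subseteq> I" "w = f x"
    using w chart_image[OF chart] by blast
  have "\<not> (i \<in> x \<longleftrightarrow> b)" "\<not> (j \<in> x \<longleftrightarrow> c)"
    using w x unfolding coord_face_def by blast+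
  moreover have sub: "flip x i \<subseteq> I" "flip x j \<subseteq> I" "flip (flip x i) j \<subseteq> I"
    using x assms by (simp_all add: flip_subset)
  ultimately have "f (flip x i) \<in> coord_face f I i b" "f (flip x j) \<in> coord_face f I j c"
    "f (flip (flip x i) j) \<in> coord_face f I i b \<inter> coord_face f I j c"
    using \<open>i \<noteq> j\<close> unfolding coord_face_def by (auto simp: mem_flip)
  moreover have "E w (f (flip x i))" "E w (f (flip x j))" "E (f (flip (flip x i) j)) (f (flip x i))"
    using chart_adj[OF chart] x sub by simp_all
  moreover have "E (f (flip (flip x i) j)) (f (flip x j))"
    using chart_adj[OF chart] x sub by (simp add: flip_commute[of x i j])
  moreover have "f (flip x i) \<noteq> f (flip x j)" "\<not> E (f (flip x i)) (f (flip x j))"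
    using chart_inj[OF chart sub(1,2)] chart_adj[OF chart sub(1,2)] \<open>i \<noteq> j\<close>
    by (simp_all add: flip_inj symdiff_flip_flip)
  ultimately show ?thesis
    using that by blast
qed

end

locale cat0_cube_complex = cube_graph V E for V :: "'v set" and E +
  assumes median: "median_graph V E"
begin

lemma adj_in_V: "E u v \<Longrightarrow> u \<in> V \<and> v \<in> V"
  and adj_sym: "E u v \<Longrightarrow> E v u"
  and adj_irrefl: "E u v \<Longrightarrow> u \<noteq> v"
  using conjunct1[OF median[unfolded median_graph_def]] by blast+

lemma connected: "u \<in> V \<Longrightarrow> v \<in> V \<Longrightarrow> \<exists>ps. walk E ps \<and> hd ps = u \<and> last ps = v"
  using conjunct1[OF conjunct2[OF median[unfolded median_graph_def]]] by blast

lemma median_ex1: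
  "x \<in> V \<Longrightarrow> y \<in> V \<Longrightarrow> z \<in> V \<Longrightarrow> \<exists>!m. m \<in> V \<and> gdist E x m + gdist E m y = gdist E x y \<and>
     gdist E y m + gdist E m z = gdist E y z \<and> gdist E x m + gdist E m z = gdist E x z"
  using conjunct2[OF conjunct2[OF median[unfolded median_graph_def]]] by blast

lemma gdist_le_walk:
  "walk E ps \<Longrightarrow> hd ps = u \<Longrightarrow> last ps = v \<Longrightarrow> length ps = Suc n \<Longrightarrow> gdist E u v \<le> n"
  unfolding gdist_def by (rule Least_le) blast

lemma shortest_walk:
  assumes "u \<in> V" "v \<in> V"
  obtains ps where "walk E ps" "hd ps = u" "last ps = v" "length ps = Suc (gdist E u v)"
proof -
  obtain ps where ps: "walk E ps" "hd ps = u" "last ps = v"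
    using connected assms by blast
  then have "length ps = Suc (length ps - 1)"
    by (cases ps) (auto simp: walk_def)
  with ps have "\<exists>n ps. walk E ps \<and> hd ps = u \<and> last ps = v \<and> length ps = Suc n"
    by blast
  then have "\<exists>ps. walk E ps \<and> hd ps = u \<and> last ps = v \<and> length ps = Suc (gdist E u v)"
    unfolding gdist_def by (rule LeastI_ex)
  then show ?thesis
    using that by blast
qed

lemma gdist_eq_0: "u \<in> V \<Longrightarrow> v \<in> V \<Longrightarrow> gdist E u v = 0 \<Longrightarrow> u = v"
  by (metis shortest_walk last_ConsL length_Suc_conv list.sel(1) length_0_conv)

lemma gdist_eq_1: "u \<in> V \<Longrightarrow> v \<in> V \<Longrightarrow> gdist E u v = 1 \<Longrightarrow> E u v"
proof -
  assume "u \<in> V" "v \<in> V" "gdist E u v = 1"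
  then obtain ps where ps: "walk E ps" "hd ps = u" "last ps = v" "length ps = 2"
    using shortest_walk by (metis Suc_1)
  then obtain a b where "ps = [a, b]"
    by (cases ps; cases "tl ps") auto
  then show "E u v"
    using ps unfolding walk_def by auto
qed

lemma gdist_adj: "E u v \<Longrightarrow> gdist E u v = 1"
proof -
  assume e: "E u v"
  have "walk E [u, v]"
    using e unfolding walk_def by simp
  then have "gdist E u v \<le> 1"
    using gdist_le_walk by fastforce
  moreover have "gdist E u v \<noteq> 0"
    using gdist_eq_0 adj_in_V[OF e] adj_irrefl[OF e] by blast
  ultimately show ?thesis by simp
qed

lemma gdist_common_neighbour:
  assumes "u \<noteq> v" "\<not> E u v" "E u w" "E w v"
  shows "gdist E u v = 2"
proof -
  have "walk E [u, w, v]"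
    using assms unfolding walk_def by (auto simp: less_Suc_eq nth_Cons split: nat.splits)
  then have "gdist E u v \<le> 2"
    using gdist_le_walk by fastforce
  moreover have "gdist E u v \<noteq> 0" "gdist E u v \<noteq> 1"
    using gdist_eq_0 gdist_eq_1 assms adj_in_V by blast+
  ultimately show ?thesis by simp
qed

lemma median_unique:
  assumes "x \<in> V" "y \<in> V" "z \<in> V"
    and "\<And>m. m \<in> {m1, m2} \<Longrightarrow> m \<in> V \<and> gdist E x m + gdist E m y = gdist E x y \<and>
      gdist E y m + gdist E m z = gdist E y z \<and> gdist E x m + gdist E m z = gdist E x z"
  shows "m1 = m2"
  using median_ex1[OF assms(1-3)] assms(4)[of m1] assms(4)[of m2] by blast

lemma no_triangle: "E a b \<Longrightarrow> E b c \<Longrightarrow> E c a \<Longrightarrow> False"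
proof -
  assume e: "E a b" "E b c" "E c a"
  have V: "a \<in> V" "b \<in> V" "c \<in> V"
    using e adj_in_V by auto
  obtain m where m: "m \<in> V" "gdist E a m + gdist E m b = gdist E a b"
    "gdist E b m + gdist E m c = gdist E b c" "gdist E a m + gdist E m c = gdist E a c"
    using median_ex1[OF V] by blast
  have d: "gdist E a b = 1" "gdist E b c = 1" "gdist E a c = 1" "gdist E b a = 1"
    using gdist_adj e adj_sym by auto
  show False
  proof (cases "gdist E a m = 0")
    case True
    then have "m = a"
      using gdist_eq_0 V m by blast
    then show False
      using m d gdist_adj[OF adj_sym[OF e(3)]] by simp
  next
    case False
    then have "m = b" "m = c"
      using m d gdist_eq_0 V by auto
    then show False
      using adj_irrefl e by blast
  qed
qed

text \<open>Two vertices at distance two have at most two common neighbours: otherwise both would be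
  medians of three of them.\<close>

lemma no_K23:
  assumes "p \<noteq> q" "\<not> E p q" "distinct [w1, w2, w3]" and common: "\<And>w. w \<in> {w1, w2, w3} \<Longrightarrow> E w p \<and> E w q"
  shows False
proof -
  have V: "w1 \<in> V" "w2 \<in> V" "w3 \<in> V" "p \<in> V" "q \<in> V"
    using common adj_in_V by blast+
  have adj: "E w1 p" "E w2 p" "E w3 p" "E p w1" "E p w2" "E p w3"
    "E w1 q" "E w2 q" "E q w2" "E q w3"
    using common adj_sym by auto
  then have "\<not> E w1 w2" "\<not> E w1 w3" "\<not> E w2 w3"
    using no_triangle by blast+
  then have "gdist E w1 w2 = 2" "gdist E w2 w3 = 2" "gdist E w1 w3 = 2"
    using gdist_common_neighbour adj \<open>distinct [w1, w2, w3]\<close> by auto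
  moreover have "gdist E w1 p = 1" "gdist E p w2 = 1" "gdist E w2 p = 1" "gdist E p w3 = 1"
    "gdist E w1 q = 1" "gdist E q w2 = 1" "gdist E w2 q = 1" "gdist E q w3 = 1"
    using adj by (simp_all add: gdist_adj)
  ultimately have "m \<in> V \<and> gdist E w1 m + gdist E m w2 = gdist E w1 w2 \<and>
      gdist E w2 m + gdist E m w3 = gdist E w2 w3 \<and> gdist E w1 m + gdist E m w3 = gdist E w1 w3"
    if "m \<in> {p, q}" for m
    using that V by fastforce
  then have "p = q"
    using median_unique[OF V(1-3)] by blast
  with \<open>p \<noteq> q\<close> show False ..
qed

lemma cube_subset_of_facets:
  assumes "is_facet V E B1 T1" "is_facet V E B2 T1" "is_facet V E B1 T2" "is_facet V E B2 T2"
    and "B1 \<noteq> B2"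
  shows "T1 \<subseteq> T2"
proof (cases "B1 \<inter> B2 = {}")
  case True
  have "finite B1" "finite B2"
    using facet_card(3,4)[OF assms(1)] facet_card(3,4)[OF assms(2)] finite_subset by blast+
  then have "card (B1 \<union> B2) = card T1"
    using True facet_card(1)[OF assms(1)] facet_card(1)[OF assms(2)] by (simp add: card_Un_disjoint)
  then have "B1 \<union> B2 = T1"
    using facet_card(3,4)[OF assms(1)] facet_card(3)[OF assms(2)] by (simp add: card_subset_eq)
  then show ?thesis
    using facet_card(3)[OF assms(3)] facet_card(3)[OF assms(4)] by blast
next
  case False
  obtain I f i b where chart: "cube_chart I f T1" and i: "i \<in> I" and B1: "B1 = coord_face f I i b"
    using assms(1) by (rule facet_chartE)
  obtain j c where j: "j \<in> I" and B2: "B2 = coord_face f I j c"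
    using facet_in_chart[OF chart assms(2)] .
  obtain J h where chart2: "cube_chart J h T2"
    using assms(3) by (rule facet_chartE)
  have "i \<noteq> j"
  proof
    assume "i = j"
    moreover have "b \<noteq> c"
    proof
      assume "b = c"
      with \<open>i = j\<close> have "B1 = B2"
        using B1 B2 by simp
      with assms(5) show False ..
    qed
    ultimately show False
      using False B1 B2 coord_faces_disjoint[OF chart] by simp
  qed
  show ?thesis
  proof
    fix w assume "w \<in> T1"
    show "w \<in> T2"
    proof (rule ccontr)
      assume "w \<notin> T2"
      then have "w \<notin> B1" "w \<notin> B2"
        using facet_card(3)[OF assms(3)] facet_card(3)[OF assms(4)] by auto
      then obtain p q r where pqr: "p \<in> B1" "q \<in> B2" "r \<in> B1" "E w p" "E w q" "E r p" "E r q"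
        "p \<noteq> q" "\<not> E p q"
        using chart_vertex_off_two_faces[OF chart i j \<open>i \<noteq> j\<close> \<open>w \<in> T1\<close>] B1 B2 by blast
      moreover have "r \<in> T2" "p \<in> T2" "q \<in> T2"
        using pqr facet_card(3)[OF assms(3)] facet_card(3)[OF assms(4)] by auto
      then obtain w2 where "w2 \<in> T2" "E w2 p" "E w2 q" "w2 \<noteq> r"
        using chart_common_neighbour[OF chart2] pqr by metis
      ultimately show False
        using no_K23[of p q w w2 r] \<open>w \<notin> T2\<close> \<open>w \<notin> B1\<close> by auto
    qed
  qed
qed

lemma facets_determine_cube:
  assumes "is_facet V E B1 T1" "is_facet V E B2 T1" "is_facet V E B1 T2" "is_facet V E B2 T2"
    and "B1 \<noteq> B2"
  shows "T1 = T2"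
proof -
  have "T1 \<subseteq> T2"
    using cube_subset_of_facets assms by blast
  moreover have "card T1 = card T2" "finite T2"
    using facet_card(1)[OF assms(1)] facet_card(1,4)[OF assms(3)] by simp_all
  ultimately show ?thesis
    using card_subset_eq by blast
qed

lemma subdiv_adj_card:
  assumes "subdiv_adj V E X Y"
  shows "(card Y = 2 * card X \<or> card X = 2 * card Y) \<and> card X > 0 \<and> card Y > 0"
  using assms facet_card(1,2) unfolding subdiv_adj_def by (elim disjE) fastforce+

lemma subdiv_adj_facet_iff:
  assumes "subdiv_adj V E X Y"
  shows "is_facet V E X Y \<longleftrightarrow> card X < card Y"
proof
  assume "is_facet V E X Y"
  then show "card X < card Y"
    using facet_card(1,2) by fastforce
next
  assume "card X < card Y"
  then have "\<not> is_facet V E Y X"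
    using facet_card(1) by fastforce
  then show "is_facet V E X Y"
    using assms unfolding subdiv_adj_def by blast
qed

lemma subdiv_adj_sym: "subdiv_adj V E X Y \<Longrightarrow> subdiv_adj V E Y X"
  by (auto simp: subdiv_adj_def)

lemma chain_square_of_path:
  assumes ab: "subdiv_adj V E a b" and bc: "subdiv_adj V E b c" and cd: "subdiv_adj V E c d"
    and da: "subdiv_adj V E d a" and "b \<noteq> d" "card a < card b" "card b < card c"
  shows "chain_square a b c d"
proof -
  have "card b = 2 * card a" "card c = 2 * card b"
    using subdiv_adj_card[OF ab] subdiv_adj_card[OF bc] assms(6,7) by auto
  moreover have "card d = 2 * card c \<or> card c = 2 * card d" "card a = 2 * card d \<or> card d = 2 * card a"
    using subdiv_adj_card[OF cd] subdiv_adj_card[OF da] by auto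
  ultimately have "card d < card c" "card a < card d"
    using assms(6) by (elim disjE; linarith)+
  then show ?thesis
    using assms subdiv_adj_sym[OF cd] subdiv_adj_sym[OF da]
    unfolding chain_square_def by (simp add: subdiv_adj_facet_iff)
qed

lemma subdiv_adj_card_neq: "subdiv_adj V E X Y \<Longrightarrow> card X \<noteq> card Y"
  using subdiv_adj_card by fastforce

text \<open>Around a square of the subdivision the cardinalities double or halve at each step and cannot
  alternate, since a cube is determined by two of its facets; so every square is a
  \<^const>\<open>chain_square\<close>.\<close>

lemma subdiv_square_chain_up:
  assumes ab: "subdiv_adj V E a b" and bc: "subdiv_adj V E b c" and cd: "subdiv_adj V E c d"
    and da: "subdiv_adj V E d a" and "distinct [a, b, c, d]" and "card a < card b"
  shows "chain_square a b c d \<or> chain_square b c d a \<or> chain_square c d a b \<or> chain_square d a b c"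
proof -
  have "a \<noteq> c" "b \<noteq> d"
    using assms(5) by auto
  note cb = subdiv_adj_sym[OF bc] and dc = subdiv_adj_sym[OF cd]
  note path = chain_square_of_path
  consider "card b < card c" | "card c < card b"
    using subdiv_adj_card_neq[OF bc] by linarith
  then show ?thesis
  proof cases
    case 1
    then show ?thesis using path[OF ab bc cd da \<open>b \<noteq> d\<close> \<open>card a < card b\<close>] by blast
  next
    case cb_lt: 2
    consider "card d < card c" | "card c < card d"
      using subdiv_adj_card_neq[OF cd] by linarith
    then show ?thesis
    proof cases
      case 1
      then show ?thesis
        using path[OF dc cb subdiv_adj_sym[OF ab] subdiv_adj_sym[OF da]] cb_lt \<open>a \<noteq> c\<close> chain_square_sym
        by blast
    next
      case cd_lt: 2
      consider "card d < card a" | "card a < card d"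
        using subdiv_adj_card_neq[OF da] by linarith
      then show ?thesis
      proof cases
        case 1
        then show ?thesis using path[OF da ab bc cd \<open>a \<noteq> c\<close>] \<open>card a < card b\<close> by blast
      next
        case 2
        then have "b = d"
          using facets_determine_cube[of a b c d] \<open>a \<noteq> c\<close> \<open>card a < card b\<close> cb_lt cd_lt
            subdiv_adj_facet_iff[OF ab] subdiv_adj_facet_iff[OF cb] subdiv_adj_facet_iff[OF cd]
            subdiv_adj_facet_iff[OF subdiv_adj_sym[OF da]]
          by blast
        with \<open>b \<noteq> d\<close> show ?thesis ..
      qed
    qed
  qed
qed

lemma subdiv_square_chain:
  assumes "subdiv_adj V E a b" "subdiv_adj V E b c" "subdiv_adj V E c d" "subdiv_adj V E d a"
    and "distinct [a, b, c, d]"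
  shows "chain_square a b c d \<or> chain_square b c d a \<or> chain_square c d a b \<or> chain_square d a b c"
proof -
  consider "card a < card b" | "card b < card a"
    using subdiv_adj_card_neq[OF assms(1)] by linarith
  then show ?thesis
  proof cases
    case 1
    then show ?thesis using subdiv_square_chain_up assms by blast
  next
    case 2
    have "distinct [b, a, d, c]"
      using assms(5) by auto
    then have "chain_square b a d c \<or> chain_square a d c b \<or> chain_square d c b a \<or> chain_square c b a d"
      using subdiv_square_chain_up[of b a d c] 2 assms(1-4) subdiv_adj_sym by blast
    then show ?thesis
      using chain_square_sym by blast
  qed
qed

end

context cube_graph
begin

lemma chart_subcube: "cube_chart I f C \<Longrightarrow> T \<subseteq> I \<Longrightarrow> cube_chart T f (f ` Pow T)"
  using chart_slice[of I f C T "{}"] by simp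

lemma coord_face_eq_slice:
  assumes "i \<in> I"
  shows "coord_face f I i b = (\<lambda>y. f (y \<union> (if b then {i} else {}))) ` Pow (I - {i})"
proof -
  have "{x. x \<subseteq> I \<and> (i \<in> x \<longleftrightarrow> b)} = (\<lambda>y. y \<union> (if b then {i} else {})) ` Pow (I - {i})"
  proof (intro equalityI subsetI)
    fix x assume "x \<in> {x. x \<subseteq> I \<and> (i \<in> x \<longleftrightarrow> b)}"
    then have "x = (x - {i}) \<union> (if b then {i} else {})" "x - {i} \<in> Pow (I - {i})"
      by auto
    then show "x \<in> (\<lambda>y. y \<union> (if b then {i} else {})) ` Pow (I - {i})"
      by blast
  qed (use assms in \<open>auto split: if_splits\<close>)
  then show ?thesis
    by (simp add: coord_face_def image_image)
qed

lemma chart_coord_face: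
  assumes "cube_chart I f C" "i \<in> I"
  shows "cube_chart (I - {i}) (\<lambda>y. f (y \<union> (if b then {i} else {}))) (coord_face f I i b)"
  using chart_slice[OF assms(1), of "I - {i}" "if b then {i} else {}"] assms(2)
  by (simp add: coord_face_eq_slice[OF assms(2)] image_image)

end

context cat0_cube_complex
begin

text \<open>The subdivision edge \<open>x\<close> joins the barycentre of a cube to that of one of its facets; it is
  transverse to the hyperplane \<open>h\<close> of \<open>X\<close> if it runs parallel to the edges of \<open>h\<close>.\<close>

definition transverse :: "'v set set \<Rightarrow> 'v set set \<Rightarrow> bool" where
  "transverse h x \<longleftrightarrow> (\<exists>C D. x = {C, D} \<and> is_facet V E D C \<and> dual_edges D C \<inter> h \<noteq> {})"

lemma transverse_facet_iff:
  assumes "is_facet V E D C"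
  shows "transverse h {C, D} \<longleftrightarrow> dual_edges D C \<inter> h \<noteq> {}"
proof
  assume "transverse h {C, D}"
  then obtain C' D' where eq: "{C, D} = {C', D'}" and facet: "is_facet V E D' C'"
    and "dual_edges D' C' \<inter> h \<noteq> {}"
    unfolding transverse_def by (elim exE conjE) (rule that)
  with facet_pair_eq[OF assms facet eq] show "dual_edges D C \<inter> h \<noteq> {}"
    by simp
next
  assume "dual_edges D C \<inter> h \<noteq> {}"
  with assms show "transverse h {C, D}"
    unfolding transverse_def by (intro exI[of _ C] exI[of _ D]) simp
qed

lemma transverse_chain_square_iff:
  assumes "chain_square B M T M'"
  shows "transverse (hyperplane_of E e) {M, B} \<longleftrightarrow> transverse (hyperplane_of E e) {T, M'}"
proof -
  have BM: "is_facet V E B M" and M'T: "is_facet V E M' T"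
    using assms by (simp_all add: chain_square_def)
  obtain e' where e': "e' \<in> dual_edges B M"
    using dual_edges_nonempty[OF BM] by blast
  have sub: "dual_edges B M \<subseteq> dual_edges M' T"
    using dual_edges_chain_square[OF assms] .
  have "dual_edges M' T \<inter> hyperplane_of E e \<noteq> {} \<Longrightarrow> e' \<in> hyperplane_of E e"
    using dual_edges_parallel[OF M'T] e' sub hyperplane_of_closed by blast
  then show ?thesis
    using transverse_facet_iff[OF BM] transverse_facet_iff[OF M'T] sub e' by blast
qed

lemma transverse_parallel:
  assumes "(x, y) \<in> parallel (subdiv_adj V E)" "transverse (hyperplane_of E e) x"
  shows "transverse (hyperplane_of E e) y"
proof -
  obtain a b c d where adj: "subdiv_adj V E a b" "subdiv_adj V E b c" "subdiv_adj V E c d"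
    "subdiv_adj V E d a" and dist: "distinct [a, b, c, d]" and xy: "x = {a, b}" "y = {d, c}"
    using assms(1) by (rule parallelE)
  note iff = transverse_chain_square_iff[where e = e]
  have "chain_square a b c d \<or> chain_square b a d c \<or> chain_square c d a b \<or> chain_square d c b a"
    using subdiv_square_chain[OF adj dist] chain_square_sym by blast
  then have "transverse (hyperplane_of E e) {a, b} \<longleftrightarrow> transverse (hyperplane_of E e) {d, c}"
    using iff[of a b c d] iff[of b a d c] iff[of c d a b] iff[of d c b a] by (auto simp: insert_commute)
  then show ?thesis
    using assms(2) xy by simp
qed

lemma transverse_rtrancl:
  assumes "(x, y) \<in> (parallel (subdiv_adj V E))\<^sup>*" "transverse (hyperplane_of E e) x"
  shows "transverse (hyperplane_of E e) y"
  using assms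
proof (induction rule: rtrancl_induct)
  case (step y z)
  then show ?case
    using transverse_parallel by blast
qed

lemma transverse_unique:
  assumes "transverse (hyperplane_of E e1) x" "transverse (hyperplane_of E e2) x"
  shows "hyperplane_of E e1 = hyperplane_of E e2"
proof -
  obtain C D where x: "x = {C, D}" and facet: "is_facet V E D C"
    using assms(1) unfolding transverse_def by (elim exE conjE) (rule that)
  obtain p where p: "p \<in> dual_edges D C" "p \<in> hyperplane_of E e1"
    using assms(1) transverse_facet_iff[OF facet] x by blast
  obtain q where q: "q \<in> dual_edges D C" "q \<in> hyperplane_of E e2"
    using assms(2) transverse_facet_iff[OF facet] x by blast
  have "q \<in> hyperplane_of E e1"
    using hyperplane_of_closed[OF p(2) dual_edges_parallel[OF facet p(1) q(1)]] .
  then show ?thesis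
    using hyperplane_of_eq[of E, OF adj_sym q(2)] hyperplane_of_eq[of E, OF adj_sym] by metis
qed

end

lemma Pow_singleton_nat: "Pow {0::nat} = {{}, {0}}"
  by (auto simp: subset_singleton_iff)

lemma subset_doubleton_nat: "x \<subseteq> {0::nat, 1} \<longleftrightarrow> x = {} \<or> x = {0} \<or> x = {1} \<or> x = {0, 1}"
  by (cases "0 \<in> x"; cases "1 \<in> x") auto

lemma Pow_doubleton_nat: "Pow {0::nat, 1} = {{}, {0}, {1}, {0, 1}}"
  using subset_doubleton_nat by auto

context cube_graph
begin
lemma subcube_square:
  assumes chart: "cube_chart I f C" and "T \<subseteq> I" "i \<in> T" "j \<in> I" "j \<notin> T"
  shows "({f ` Pow T, coord_face f T i b}, {f ` Pow (insert j T), coord_face f (insert j T) i b})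
    \<in> parallel (subdiv_adj V E)"
proof -
  define T' s where "T' = insert j T" and "s = (if b then {i} else {})"
  have T: "T' \<subseteq> I" "i \<in> T'" "j \<in> T'" "T' - {i} - {j} = T - {i}" "j \<noteq> i"
    using assms by (auto simp: T'_def)
  have chart_T: "cube_chart T f (f ` Pow T)" and chart_T': "cube_chart T' f (f ` Pow T')"
    using chart_subcube[OF chart] assms T by auto
  have "is_facet V E (coord_face f T i b) (f ` Pow T)" "is_facet V E (coord_face f T' i b) (f ` Pow T')"
    using facet_of_chart[OF chart_T \<open>i \<in> T\<close>] facet_of_chart[OF chart_T' \<open>i \<in> T'\<close>] by blast+
  moreover have "{x. x \<subseteq> T' \<and> (j \<in> x \<longleftrightarrow> False)} = Pow T"
    using \<open>j \<notin> T\<close> by (auto simp: T'_def)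
  then have "is_facet V E (f ` Pow T) (f ` Pow T')"
    using facet_of_chart[OF chart_T' \<open>j \<in> T'\<close>, of False] by (simp add: coord_face_def)
  moreover have "{y. y \<subseteq> T' - {i} \<and> (j \<in> y \<longleftrightarrow> False)} = Pow (T - {i})"
    using \<open>j \<notin> T\<close> by (auto simp: T'_def)
  then have "coord_face (\<lambda>y. f (y \<union> s)) (T' - {i}) j False = coord_face f T i b"
    unfolding coord_face_eq_slice[OF \<open>i \<in> T\<close>] by (simp add: coord_face_def s_def)
  then have "is_facet V E (coord_face f T i b) (coord_face f T' i b)"
    using facet_of_chart[OF chart_coord_face[OF chart_T' \<open>i \<in> T'\<close>, of b], of j False] T
    unfolding s_def by simp
  moreover have "s \<union> {j} \<subseteq> T'" "i \<in> s \<union> {j} \<longleftrightarrow> b"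
    using T by (auto simp: s_def)
  then have "f (s \<union> {j}) \<in> coord_face f T' i b"
    unfolding coord_face_def by blast
  moreover have "f (s \<union> {j}) \<notin> f ` Pow T"
  proof
    assume "f (s \<union> {j}) \<in> f ` Pow T"
    then obtain y where "y \<subseteq> T" "f (s \<union> {j}) = f y"
      by blast
    then have "s \<union> {j} = y"
      using chart_inj[OF chart_T' \<open>s \<union> {j} \<subseteq> T'\<close>] by (auto simp: T'_def)
    with \<open>y \<subseteq> T\<close> \<open>j \<notin> T\<close> show False
      by blast
  qed
  ultimately have "chain_square (coord_face f T i b) (f ` Pow T) (f ` Pow T') (coord_face f T' i b)"
    unfolding chain_square_def by blast
  then show ?thesis
    using chain_square_parallel unfolding T'_def by blast
qed

end

context cat0_cube_complex
begin

lemma edge_chart: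
  assumes e: "E u v"
  shows "cube_chart {0} (\<lambda>x. if x = {} then u else v) {u, v}"
  unfolding cube_chart_def Pow_singleton_nat
proof (intro conjI allI impI)
  show "{u, v} \<subseteq> V"
    using adj_in_V[OF e] by simp
  show "bij_betw (\<lambda>x. if x = {} then u else v) {{}, {0}} {u, v}"
    using adj_irrefl[OF e] by (auto simp: bij_betw_def inj_on_def)
next
  fix x y :: "nat set" assume "x \<subseteq> {0}" "y \<subseteq> {0}"
  then have "x = {} \<or> x = {0}" "y = {} \<or> y = {0}"
    by (auto simp: subset_singleton_iff)
  then show "E (if x = {} then u else v) (if y = {} then u else v) \<longleftrightarrow> hamming x y = 1"
    using e adj_sym[OF e] adj_irrefl by auto
qed simp

lemma edge_facet:
  assumes "E u v"
  shows "is_facet V E {u} {u, v}"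
proof -
  have "{x. x \<subseteq> {0::nat} \<and> (0 \<in> x \<longleftrightarrow> False)} = {{}}"
    by auto
  then have "coord_face (\<lambda>x. if x = {} then u else v) {0} 0 False = {u}"
    by (simp add: coord_face_def)
  then show ?thesis
    using facet_of_chart[OF edge_chart[OF assms], of 0 False] by simp
qed

text \<open>A square of \<open>X\<close> is a \<open>2\<close>-cube: it has no diagonals since median graphs have no triangles.\<close>

lemma square_chart:
  assumes e: "E a b" "E b c" "E c d" "E d a" and dist: "distinct [a, b, c, d]"
  defines "q \<equiv> \<lambda>x. if x = {} then a else if x = {0::nat} then b else if x = {1} then d else c"
  shows "cube_chart {0, 1} q {a, b, c, d}"
  unfolding cube_chart_def Pow_doubleton_nat
proof (intro conjI allI impI)
  show "{a, b, c, d} \<subseteq> V"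
    using e adj_in_V by auto
  show "bij_betw q {{}, {0}, {1}, {0, 1}} {a, b, c, d}"
    using dist by (auto simp: bij_betw_def inj_on_def q_def)
next
  fix x y :: "nat set" assume "x \<subseteq> {0, 1}" "y \<subseteq> {0, 1}"
  then have "x = {} \<or> x = {0} \<or> x = {1} \<or> x = {0, 1}" "y = {} \<or> y = {0} \<or> y = {1} \<or> y = {0, 1}"
    using subset_doubleton_nat by blast+
  moreover have "\<not> E a c" "\<not> E c a" "\<not> E b d" "\<not> E d b" "\<not> E z z" for z
    using no_triangle e adj_sym adj_irrefl by metis+
  moreover have "E b a" "E c b" "E d c" "E a d"
    using e adj_sym by blast+
  ultimately show "E (q x) (q y) \<longleftrightarrow> hamming x y = 1"
    using e unfolding q_def by (elim disjE) (simp_all add: insert_Diff_if)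
qed simp

lemma square_lift:
  assumes e: "E a b" "E b c" "E c d" "E d a" and dist: "distinct [a, b, c, d]"
  shows "({{a, b}, {a}}, {{d, c}, {d}}) \<in> (parallel (subdiv_adj V E))\<^sup>*"
proof -
  define q where "q \<equiv> \<lambda>x. if x = {} then a else if x = {0::nat} then b else if x = {1} then d else c"
  define Q where "Q = {a, b, c, d}"
  have chart: "cube_chart {0, 1} q Q"
    using square_chart[OF e dist] unfolding q_def Q_def .
  have "{x. x \<subseteq> {0::nat, 1} \<and> (1 \<in> x \<longleftrightarrow> False)} = {{}, {0}}"
    "{x. x \<subseteq> {0::nat, 1} \<and> (0 \<in> x \<longleftrightarrow> False)} = {{}, {1}}"
    "{x. x \<subseteq> {0::nat, 1} \<and> (1 \<in> x \<longleftrightarrow> True)} = {{1}, {0, 1}}"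
    by (auto simp: subset_doubleton_nat)
  then have "coord_face q {0, 1} 1 False = {a, b}" "coord_face q {0, 1} 0 False = {a, d}"
    "coord_face q {0, 1} 1 True = {d, c}"
    by (auto simp: coord_face_def q_def)
  then have "is_facet V E {a, b} Q" "is_facet V E {a, d} Q" "is_facet V E {d, c} Q"
    using facet_of_chart[OF chart] by (metis insertCI)+
  moreover have "is_facet V E {a} {a, b}" "is_facet V E {a} {a, d}" "is_facet V E {d} {a, d}"
    "is_facet V E {d} {d, c}"
    using edge_facet e adj_sym by (metis insert_commute)+
  moreover have "{a, b} \<noteq> {a, d}" "{d, c} \<noteq> {a, d}"
    using dist by auto
  ultimately have "chain_square {a} {a, b} Q {a, d}" "chain_square {d} {d, c} Q {a, d}"
    by (simp_all add: chain_square_def)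
  then have "({{a, b}, {a}}, {Q, {a, d}}) \<in> parallel (subdiv_adj V E)"
    "({Q, {a, d}}, {{d, c}, {d}}) \<in> parallel (subdiv_adj V E)"
    using parallel_sym[OF subdiv_adj_sym chain_square_parallel] chain_square_parallel by blast+
  then show ?thesis
    by (meson r_into_rtrancl rtrancl_into_rtrancl)
qed

lemma lift_parallel:
  assumes "(e, e') \<in> (parallel E)\<^sup>*" "u \<in> e"
  obtains u' where "u' \<in> e'" "({e, {u}}, {e', {u'}}) \<in> (parallel (subdiv_adj V E))\<^sup>*"
  using assms
proof (induction arbitrary: thesis rule: rtrancl_induct)
  case base
  then show ?case by blast
next
  case (step y z)
  then obtain u' where u': "u' \<in> y" "({e, {u}}, {y, {u'}}) \<in> (parallel (subdiv_adj V E))\<^sup>*"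
    by blast
  obtain a b c d where sq: "E a b" "E b c" "E c d" "E d a" "distinct [a, b, c, d]" "y = {a, b}"
    "z = {d, c}"
    using step(2) by (rule parallelE)
  have "u' = a \<or> u' = b"
    using u'(1) sq(6) by blast
  then have "({y, {u'}}, {z, {d}}) \<in> (parallel (subdiv_adj V E))\<^sup>* \<or>
      ({y, {u'}}, {z, {c}}) \<in> (parallel (subdiv_adj V E))\<^sup>*"
  proof
    assume "u' = a"
    then show ?thesis
      using square_lift[OF sq(1-5)] sq(6,7) by simp
  next
    assume "u' = b"
    have "distinct [b, a, d, c]"
      using sq(5) by auto
    then show ?thesis
      using square_lift[of b a d c] sq adj_sym \<open>u' = b\<close> by (simp add: insert_commute)
  qed
  then show ?case
    using step.prems u'(2) sq(7) by (meson insertI1 insertI2 rtrancl_trans)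
qed

lemma subdiv_parallel_rtrancl_sym:
  "(x, y) \<in> (parallel (subdiv_adj V E))\<^sup>* \<Longrightarrow> (y, x) \<in> (parallel (subdiv_adj V E))\<^sup>*"
  by (rule rtrancl_parallel_sym) (auto simp: subdiv_adj_def)

lemma facet_parallel_edge:
  assumes "is_facet V E D C"
  obtains u v where "E u v" "({C, D}, {{u, v}, {u}}) \<in> (parallel (subdiv_adj V E))\<^sup>*"
proof -
  obtain I f i b where chart: "cube_chart I f C" and i: "i \<in> I" and D: "D = coord_face f I i b"
    using assms by (rule facet_chartE)
  let ?R = "(parallel (subdiv_adj V E))\<^sup>*"
  let ?x = "\<lambda>T. {f ` Pow T, coord_face f T i b}"
  have grow: "K \<subseteq> I - {i} \<longrightarrow> (?x {i}, ?x (insert i K)) \<in> ?R" if "finite K" for K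
    using that
  proof (induction K rule: finite_induct)
    case (insert j K)
    show ?case
    proof
      assume sub: "insert j K \<subseteq> I - {i}"
      then have "(?x {i}, ?x (insert i K)) \<in> ?R"
        using insert.IH by blast
      moreover have "(?x (insert i K), ?x (insert j (insert i K))) \<in> parallel (subdiv_adj V E)"
        using subcube_square[OF chart, of "insert i K" i j] sub i insert.hyps by blast
      ultimately show "(?x {i}, ?x (insert i (insert j K))) \<in> ?R"
        by (simp add: insert_commute[of i j] rtrancl_into_rtrancl)
    qed
  qed simp
  have "insert i (I - {i}) = I"
    using i by blast
  then have "(?x {i}, {C, D}) \<in> ?R"
    using grow[of "I - {i}"] chart_finite[OF chart] chart_image[OF chart] D by simp
  then have "({C, D}, ?x {i}) \<in> ?R"
    by (rule subdiv_parallel_rtrancl_sym)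
  moreover define s where "s = (if b then {i} else {})"
  have "Pow {i} = {s, flip s i}" "{x. x \<subseteq> {i} \<and> (i \<in> x \<longleftrightarrow> b)} = {s}"
    by (cases b; auto simp: s_def flip_def subset_singleton_iff)+
  then have "?x {i} = {{f s, f (flip s i)}, {f s}}"
    by (simp add: coord_face_def)
  moreover have "E (f s) (f (flip s i))"
    using chart_adj[OF chart] i by (simp add: s_def flip_subset)
  ultimately show ?thesis
    using that by simp
qed

lemma subdiv_adj_parallel_edge:
  assumes "subdiv_adj V E C D"
  obtains u v where "E u v" "({C, D}, {{u, v}, {u}}) \<in> (parallel (subdiv_adj V E))\<^sup>*"
proof -
  have "is_facet V E D C \<or> is_facet V E C D"
    using assms by (simp add: subdiv_adj_def)
  then show ?thesis
    using facet_parallel_edge[of D C] facet_parallel_edge[of C D] that by (auto simp: insert_commute)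
qed

end

locale word_metric = group G for G (structure) +
  fixes S :: "'a set"
  assumes fin_gen: "fin_gen_set G S"
begin

abbreviation letters :: "'a set" where "letters \<equiv> S \<union> m_inv G ` S"

abbreviation len\<^sub>S :: "'a \<Rightarrow> nat" where "len\<^sub>S \<equiv> word_len G S"

abbreviation dist\<^sub>S :: "'a \<Rightarrow> 'a \<Rightarrow> nat" where "dist\<^sub>S \<equiv> wdist G S"

definition word_val :: "'a list \<Rightarrow> 'a" where
  "word_val ws = foldr (\<otimes>) ws \<one>"

lemma word_val_Nil [simp]: "word_val [] = \<one>"
  and word_val_Cons [simp]: "word_val (a # ws) = a \<otimes> word_val ws"
  by (simp_all add: word_val_def)

lemma gens_closed: "S \<subseteq> carrier G"
  using fin_gen by (simp add: fin_gen_set_def)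

lemma letters_closed: "letters \<subseteq> carrier G"
  using gens_closed by auto

lemma inv_letter: "x \<in> letters \<Longrightarrow> inv x \<in> letters"
  using gens_closed by auto

lemma word_val_closed: "set ws \<subseteq> carrier G \<Longrightarrow> word_val ws \<in> carrier G"
  by (induction ws) auto

lemma word_val_append:
  "set ws \<subseteq> carrier G \<Longrightarrow> set vs \<subseteq> carrier G \<Longrightarrow> word_val (ws @ vs) = word_val ws \<otimes> word_val vs"
  by (induction ws) (auto simp: m_assoc word_val_closed)

lemma word_val_rev_inv:
  "set ws \<subseteq> carrier G \<Longrightarrow> word_val (rev (map (m_inv G) ws)) = inv (word_val ws)"
proof (induction ws)
  case (Cons a ws)
  moreover have "set (rev (map (m_inv G) ws)) \<subseteq> carrier G"
    using Cons.prems by auto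
  ultimately have "word_val (rev (map (m_inv G) (a # ws))) = inv (word_val ws) \<otimes> inv a"
    by (simp add: word_val_append)
  with Cons.prems show ?case
    by (simp add: inv_mult_group word_val_closed)
qed simp

lemma word_of_generate: "g \<in> generate G S \<Longrightarrow> \<exists>ws. set ws \<subseteq> letters \<and> g = word_val ws"
proof (induction rule: generate.induct)
  case one
  show ?case by (intro exI[of _ "[]"]) simp
next
  case (incl h)
  then show ?case using gens_closed by (intro exI[of _ "[h]"]) auto
next
  case (inv h)
  then show ?case using gens_closed by (intro exI[of _ "[inv h]"]) auto
next
  case (eng h1 h2)
  then obtain ws vs where "set ws \<subseteq> letters" "h1 = word_val ws" "set vs \<subseteq> letters" "h2 = word_val vs"
    by blast
  moreover have "set ws \<subseteq> carrier G" "set vs \<subseteq> carrier G"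
    using calculation letters_closed by auto
  ultimately show ?case
    by (intro exI[of _ "ws @ vs"]) (simp add: word_val_append)
qed

lemma word_len_eq: "len\<^sub>S g = (LEAST n. \<exists>ws. length ws = n \<and> set ws \<subseteq> letters \<and> g = word_val ws)"
  by (simp add: word_len_def word_val_def)

lemma word_len_le: "set ws \<subseteq> letters \<Longrightarrow> g = word_val ws \<Longrightarrow> len\<^sub>S g \<le> length ws"
  unfolding word_len_eq by (rule Least_le) blast

lemma shortest_word:
  assumes "g \<in> carrier G"
  obtains ws where "length ws = len\<^sub>S g" "set ws \<subseteq> letters" "g = word_val ws"
proof -
  have "\<exists>ws. set ws \<subseteq> letters \<and> g = word_val ws"
    using assms fin_gen word_of_generate by (simp add: fin_gen_set_def)
  then have "\<exists>ws. length ws = len\<^sub>S g \<and> set ws \<subseteq> letters \<and> g = word_val ws"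
    unfolding word_len_eq by (rule_tac LeastI_ex) blast
  then show ?thesis using that by blast
qed

lemma word_len_one [simp]: "len\<^sub>S \<one> = 0"
  using word_len_le[of "[]" \<one>] by simp

lemma word_len_letter: "s \<in> letters \<Longrightarrow> len\<^sub>S s \<le> 1"
  using word_len_le[of "[s]" s] letters_closed by auto

lemma word_len_eq_0: "g \<in> carrier G \<Longrightarrow> len\<^sub>S g = 0 \<Longrightarrow> g = \<one>"
  by (metis length_0_conv shortest_word word_val_Nil)

lemma word_len_mult:
  assumes "g \<in> carrier G" "h \<in> carrier G"
  shows "len\<^sub>S (g \<otimes> h) \<le> len\<^sub>S g + len\<^sub>S h"
proof -
  obtain ws vs where "length ws = len\<^sub>S g" "set ws \<subseteq> letters" "g = word_val ws"
    and "length vs = len\<^sub>S h" "set vs \<subseteq> letters" "h = word_val vs"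
    using shortest_word assms by metis
  then show ?thesis
    using word_len_le[of "ws @ vs" "g \<otimes> h"] letters_closed by (auto simp: word_val_append)
qed

lemma word_len_inv_le: "g \<in> carrier G \<Longrightarrow> len\<^sub>S (inv g) \<le> len\<^sub>S g"
proof -
  assume "g \<in> carrier G"
  then obtain ws where ws: "length ws = len\<^sub>S g" "set ws \<subseteq> letters" "g = word_val ws"
    using shortest_word by metis
  then have "set (rev (map (m_inv G) ws)) \<subseteq> letters"
    using inv_letter by auto
  with ws show ?thesis
    using word_len_le word_val_rev_inv letters_closed by (metis dual_order.trans length_map length_rev)
qed

lemma word_len_inv [simp]: "g \<in> carrier G \<Longrightarrow> len\<^sub>S (inv g) = len\<^sub>S g"
  by (metis antisym inv_closed inv_inv word_len_inv_le)

lemma wdist_eq: "dist\<^sub>S x y = len\<^sub>S (inv x \<otimes> y)"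
  by (simp add: wdist_def)

lemma wdist_self [simp]: "x \<in> carrier G \<Longrightarrow> dist\<^sub>S x x = 0"
  by (simp add: wdist_eq)

lemma wdist_commute: "x \<in> carrier G \<Longrightarrow> y \<in> carrier G \<Longrightarrow> dist\<^sub>S x y = dist\<^sub>S y x"
  by (metis wdist_eq inv_mult_group inv_inv inv_closed m_closed word_len_inv)

lemma wdist_triangle:
  assumes "x \<in> carrier G" "y \<in> carrier G" "z \<in> carrier G"
  shows "dist\<^sub>S x z \<le> dist\<^sub>S x y + dist\<^sub>S y z"
proof -
  have "inv x \<otimes> z = (inv x \<otimes> y) \<otimes> (inv y \<otimes> z)"
    using assms by (simp add: m_assoc[symmetric]) (simp add: m_assoc)
  then show ?thesis
    using word_len_mult[of "inv x \<otimes> y" "inv y \<otimes> z"] assms by (simp add: wdist_eq)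
qed

lemma wdist_triangle_real:
  "x \<in> carrier G \<Longrightarrow> y \<in> carrier G \<Longrightarrow> z \<in> carrier G \<Longrightarrow>
    real (dist\<^sub>S x z) \<le> real (dist\<^sub>S x y) + real (dist\<^sub>S y z)"
  using wdist_triangle by (metis of_nat_add of_nat_le_iff)

lemma wdist_mult_right: "x \<in> carrier G \<Longrightarrow> t \<in> carrier G \<Longrightarrow> dist\<^sub>S x (x \<otimes> t) = len\<^sub>S t"
  by (simp add: wdist_eq m_assoc[symmetric])

lemma wdist_path_le:
  assumes "set ps \<subseteq> carrier G" and steps: "\<forall>k < length ps - 1. dist\<^sub>S (ps ! k) (ps ! Suc k) \<le> 1"
    and "i \<le> j" "j < length ps"
  shows "dist\<^sub>S (ps ! i) (ps ! j) \<le> j - i"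
  using \<open>i \<le> j\<close> \<open>j < length ps\<close>
proof (induction j)
  case (Suc j)
  have closed: "k < length ps \<Longrightarrow> ps ! k \<in> carrier G" for k
    using assms(1) by auto
  show ?case
  proof (cases "i = Suc j")
    case False
    with Suc have "dist\<^sub>S (ps ! i) (ps ! j) \<le> j - i" by simp
    moreover have "dist\<^sub>S (ps ! j) (ps ! Suc j) \<le> 1"
      using steps Suc.prems by simp
    ultimately show ?thesis
      using wdist_triangle[of "ps ! i" "ps ! j" "ps ! Suc j"] closed Suc.prems False by fastforce
  qed (use closed Suc.prems in simp)
qed (use assms(1) nth_mem in fastforce)

lemma cayley_geodesic_dist:
  assumes geo: "cayley_geodesic G S ps" and i: "i < length ps"
  shows "dist\<^sub>S (hd ps) (ps ! i) = i" and "dist\<^sub>S (ps ! i) (last ps) = length ps - 1 - i"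
proof -
  have ne: "ps \<noteq> []" and closed: "set ps \<subseteq> carrier G"
    using geo by (auto simp: cayley_geodesic_def)
  have steps: "\<forall>k < length ps - 1. dist\<^sub>S (ps ! k) (ps ! Suc k) \<le> 1"
    using geo by (simp add: cayley_geodesic_def)
  have ends: "hd ps = ps ! 0" "last ps = ps ! (length ps - 1)"
    using ne by (simp_all add: hd_conv_nth last_conv_nth)
  have "dist\<^sub>S (ps ! 0) (ps ! i) \<le> i" "dist\<^sub>S (ps ! i) (ps ! (length ps - 1)) \<le> length ps - 1 - i"
    using wdist_path_le[OF closed steps, of 0 i] wdist_path_le[OF closed steps, of i "length ps - 1"] i
    by auto
  moreover have "dist\<^sub>S (ps ! 0) (ps ! (length ps - 1)) \<le> dist\<^sub>S (ps ! 0) (ps ! i) + dist\<^sub>S (ps ! i) (ps ! (length ps - 1))"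
    using closed i ne by (intro wdist_triangle) auto
  moreover have "dist\<^sub>S (ps ! 0) (ps ! (length ps - 1)) = length ps - 1"
    using geo ends by (simp add: cayley_geodesic_def)
  ultimately show "dist\<^sub>S (hd ps) (ps ! i) = i" "dist\<^sub>S (ps ! i) (last ps) = length ps - 1 - i"
    unfolding ends using i by linarith+
qed

text \<open>A shortest word for \<open>inv x \<otimes> y\<close>, read letter by letter from \<open>x\<close>, is a geodesic: its
  steps have length at most one, and none can be shorter since the total length is \<open>dist\<^sub>S x y\<close>.\<close>

lemma cayley_geodesic_exists:
  assumes x: "x \<in> carrier G" and y: "y \<in> carrier G"
  obtains ps where "cayley_geodesic G S ps" "hd ps = x" "last ps = y"
proof -
  obtain ws where ws: "length ws = dist\<^sub>S x y" "set ws \<subseteq> letters" "inv x \<otimes> y = word_val ws"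
    using shortest_word[of "inv x \<otimes> y"] x y by (metis inv_closed m_closed wdist_eq)
  define n where "n = length ws"
  define ps where "ps = map (\<lambda>i. x \<otimes> word_val (take i ws)) [0..<Suc n]"
  have take_closed: "set (take i ws) \<subseteq> carrier G" for i
    using ws(2) letters_closed by (meson set_take_subset subset_trans)
  have len: "length ps = Suc n" and nth: "i \<le> n \<Longrightarrow> ps ! i = x \<otimes> word_val (take i ws)" for i
    by (simp_all add: ps_def nth_append del: upt_Suc)
  have closed: "set ps \<subseteq> carrier G"
    using x take_closed by (auto simp: ps_def intro!: word_val_closed)
  have ne: "ps \<noteq> []" using len by auto
  have hd: "hd ps = x"
    using nth[of 0] ne x by (simp add: hd_conv_nth)
  have "last ps = x \<otimes> word_val ws"
    using nth[of n] ne len by (simp add: last_conv_nth n_def)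
  then have last: "last ps = y"
    using x y ws(3)[symmetric] by (simp add: m_assoc[symmetric])
  have step_le: "dist\<^sub>S (ps ! i) (ps ! Suc i) \<le> 1" if i: "i < n" for i
  proof -
    have l: "ws ! i \<in> letters" using ws(2) i n_def nth_mem by blast
    have c: "ws ! i \<in> carrier G" using l letters_closed by blast
    have "word_val (take (Suc i) ws) = word_val (take i ws) \<otimes> ws ! i"
      using i n_def c take_closed[of i] by (simp add: take_Suc_conv_app_nth word_val_append)
    then have "ps ! Suc i = ps ! i \<otimes> ws ! i"
      using nth i x c word_val_closed[OF take_closed] by (simp add: m_assoc)
    then have "dist\<^sub>S (ps ! i) (ps ! Suc i) = len\<^sub>S (ws ! i)"
      using wdist_mult_right c i nth x word_val_closed[OF take_closed] by simp
    then show ?thesis using word_len_letter[OF l] by simp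
  qed
  then have steps: "\<forall>k < length ps - 1. dist\<^sub>S (ps ! k) (ps ! Suc k) \<le> 1"
    using len by simp
  have "dist\<^sub>S (ps ! i) (ps ! Suc i) = 1" if i: "i < n" for i
  proof -
    have c: "ps ! i \<in> carrier G" "ps ! Suc i \<in> carrier G"
      using closed len i by auto
    have "dist\<^sub>S x y \<le> dist\<^sub>S x (ps ! i) + dist\<^sub>S (ps ! i) y"
      using wdist_triangle c x y by blast
    moreover have "dist\<^sub>S (ps ! i) y \<le> dist\<^sub>S (ps ! i) (ps ! Suc i) + dist\<^sub>S (ps ! Suc i) y"
      using wdist_triangle c y by blast
    moreover have "dist\<^sub>S x (ps ! i) \<le> i" "dist\<^sub>S (ps ! Suc i) y \<le> n - Suc i"
      using wdist_path_le[OF closed steps, of 0 i] wdist_path_le[OF closed steps, of "Suc i" n]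
        hd last ne len i by (auto simp: hd_conv_nth last_conv_nth)
    ultimately show ?thesis using step_le[OF i] ws(1) n_def i by linarith
  qed
  then have "cayley_geodesic G S ps"
    using ne len closed hd last ws(1) by (simp add: cayley_geodesic_def n_def)
  then show ?thesis using that hd last by blast
qed

definition four_point :: "real \<Rightarrow> bool" where
  "four_point \<delta> \<longleftrightarrow> (\<forall>x\<in>carrier G. \<forall>y\<in>carrier G. \<forall>z\<in>carrier G. \<forall>w\<in>carrier G.
      gromov_prod G S x y w \<ge> min (gromov_prod G S x z w) (gromov_prod G S y z w) - \<delta>)"

lemma hyperbolic_wrt_iff: "hyperbolic_wrt G S \<longleftrightarrow> (\<exists>\<delta>. four_point \<delta>)"
  by (simp add: hyperbolic_wrt_def four_point_def)

text \<open>The point of a geodesic \<open>[x', y']\<close> at distance \<open>\<lfloor>(p|y')\<^sub>x'\<rfloor>\<close> from \<open>x'\<close> is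
  within \<open>(x'|y')\<^sub>p + 2\<delta> + 1\<close> of \<open>p\<close>.\<close>

lemma dist_geodesic_le_gromov_prod:
  assumes hyp: "four_point \<delta>" and geo: "cayley_geodesic G S qs" and p: "p \<in> carrier G"
  obtains q where "q \<in> set qs" "real (dist\<^sub>S p q) \<le> gromov_prod G S (hd qs) (last qs) p + 2 * \<delta> + 1"
proof -
  define x' y' n where "x' = hd qs" and "y' = last qs" and "n = length qs - 1"
  have ne: "qs \<noteq> []" and closed: "set qs \<subseteq> carrier G"
    using geo by (auto simp: cayley_geodesic_def)
  have c: "x' \<in> carrier G" "y' \<in> carrier G"
    using ne closed by (auto simp: x'_def y'_def)
  have n: "dist\<^sub>S x' y' = n"
    using geo by (simp add: cayley_geodesic_def x'_def y'_def n_def)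
  define t where "t = gromov_prod G S p y' x'"
  have t: "t = (real (dist\<^sub>S x' p) + n - real (dist\<^sub>S p y')) / 2"
    by (simp add: t_def gromov_prod_def n)
  have t_bounds: "0 \<le> t" "t \<le> n"
    using wdist_triangle_real[of p x' y'] wdist_triangle_real[of x' y' p] c p n
      wdist_commute[of x' p] wdist_commute[of y' p] unfolding t by simp_all
  define m where "m = nat \<lfloor>t\<rfloor>"
  have m: "real m \<le> t" "t < real m + 1" "m \<le> n"
    using t_bounds by (simp_all add: m_def) linarith
  define q where "q = qs ! m"
  have m_len: "m < length qs"
    using m(3) ne n_def by (cases qs) auto
  then have q: "q \<in> set qs" "q \<in> carrier G"
    using closed by (auto simp: q_def)
  have dq: "dist\<^sub>S x' q = m" "dist\<^sub>S q y' = n - m"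
    using cayley_geodesic_dist[OF geo m_len] by (simp_all add: x'_def y'_def q_def n_def)
  have "gromov_prod G S q y' x' = m"
    using dq m(3) n by (simp add: gromov_prod_def)
  moreover have "gromov_prod G S p q x' \<ge> min t (gromov_prod G S q y' x') - \<delta>"
    using hyp p q c unfolding four_point_def t_def by blast
  ultimately have "gromov_prod G S p q x' \<ge> m - \<delta>"
    using m(1) by (simp add: min_absorb2)
  then have "(real (dist\<^sub>S x' p) + m - real (dist\<^sub>S p q)) / 2 \<ge> m - \<delta>"
    using dq by (simp add: gromov_prod_def)
  then have "real (dist\<^sub>S p q) \<le> real (dist\<^sub>S x' p) - m + 2 * \<delta>"
    by (simp add: field_simps)
  also have "\<dots> \<le> gromov_prod G S x' y' p + 2 * \<delta> + 1"
    using m(2) wdist_commute[of x' p] c p unfolding t by (simp add: gromov_prod_def n field_simps)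
  finally show ?thesis
    using that q unfolding x'_def y'_def by blast
qed

lemma geodesic_fellow_traveller:
  assumes hyp: "four_point \<delta>" and geo_ps: "cayley_geodesic G S ps" and geo_qs: "cayley_geodesic G S qs"
    and hd: "dist\<^sub>S (hd ps) (hd qs) \<le> R" and last: "dist\<^sub>S (last ps) (last qs) \<le> R" and p: "p \<in> set ps"
  obtains q where "q \<in> set qs" "real (dist\<^sub>S p q) \<le> 2 * real R + 2 * \<delta> + 1"
proof -
  define x y x' y' where "x = hd ps" and "y = last ps" and "x' = hd qs" and "y' = last qs"
  have "ps \<noteq> []" "qs \<noteq> []" "set ps \<subseteq> carrier G" "set qs \<subseteq> carrier G"
    using geo_ps geo_qs by (auto simp: cayley_geodesic_def)
  then have c: "x \<in> carrier G" "y \<in> carrier G" "x' \<in> carrier G" "y' \<in> carrier G" "p \<in> carrier G"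
    using p by (auto simp: x_def y_def x'_def y'_def)
  obtain i where i: "i < length ps" "p = ps ! i"
    using p by (metis in_set_conv_nth)
  have on_geodesic: "real (dist\<^sub>S p x) + real (dist\<^sub>S p y) = real (dist\<^sub>S x y)"
    using cayley_geodesic_dist[OF geo_ps i(1)] geo_ps i c wdist_commute[of x p]
    unfolding x_def y_def cayley_geodesic_def by auto
  have "real (dist\<^sub>S p x') \<le> real (dist\<^sub>S p x) + R" "real (dist\<^sub>S p y') \<le> real (dist\<^sub>S p y) + R"
    "real (dist\<^sub>S x y) \<le> R + real (dist\<^sub>S x' y') + R"
    using wdist_triangle_real[of p x x'] wdist_triangle_real[of p y y'] wdist_triangle_real[of x x' y]
      wdist_triangle_real[of x' y' y] wdist_commute[of y y'] c hd last
    unfolding x_def y_def x'_def y'_def by fastforce+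
  then have "gromov_prod G S x' y' p \<le> 2 * real R"
    using on_geodesic by (simp add: gromov_prod_def)
  moreover obtain q where "q \<in> set qs" "real (dist\<^sub>S p q) \<le> gromov_prod G S x' y' p + 2 * \<delta> + 1"
    using dist_geodesic_le_gromov_prod[OF hyp geo_qs c(5)] unfolding x'_def y'_def by blast
  ultimately show ?thesis
    using that by fastforce
qed

lemma quasiconvex_close_subset:
  assumes qc: "quasiconvex G S A" and "B \<subseteq> A" "A \<subseteq> carrier G"
    and close: "\<forall>a\<in>A. \<exists>b\<in>B. dist\<^sub>S a b \<le> R"
  shows "quasiconvex G S B"
proof -
  obtain K where K: "\<forall>ps. cayley_geodesic G S ps \<and> hd ps \<in> A \<and> last ps \<in> A \<longrightarrow>
       (\<forall>p \<in> set ps. \<exists>a \<in> A. dist\<^sub>S p a \<le> K)"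
    using qc unfolding quasiconvex_def by blast
  have "\<exists>b\<in>B. dist\<^sub>S p b \<le> K + R"
    if ps: "cayley_geodesic G S ps" "hd ps \<in> B" "last ps \<in> B" and p: "p \<in> set ps" for ps p
  proof -
    obtain a where a: "a \<in> A" "dist\<^sub>S p a \<le> K"
      using K ps p \<open>B \<subseteq> A\<close> by blast
    moreover obtain b where b: "b \<in> B" "dist\<^sub>S a b \<le> R"
      using close a by blast
    moreover have "p \<in> carrier G"
      using ps p by (auto simp: cayley_geodesic_def)
    moreover have "a \<in> carrier G" "b \<in> carrier G"
      using a b assms by auto
    ultimately show ?thesis
      using wdist_triangle[of p a b] by (intro bexI[of _ b]) auto
  qed
  then show ?thesis unfolding quasiconvex_def by blast
qed

lemma quasiconvex_close_superset:
  assumes hyp: "four_point \<delta>" and qc: "quasiconvex G S B" and "B \<subseteq> A" "A \<subseteq> carrier G"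
    and close: "\<forall>a\<in>A. \<exists>b\<in>B. dist\<^sub>S a b \<le> R"
  shows "quasiconvex G S A"
proof -
  obtain K where K: "\<forall>ps. cayley_geodesic G S ps \<and> hd ps \<in> B \<and> last ps \<in> B \<longrightarrow>
       (\<forall>p \<in> set ps. \<exists>b \<in> B. dist\<^sub>S p b \<le> K)"
    using qc unfolding quasiconvex_def by blast
  define C where "C = nat \<lceil>2 * real R + 2 * \<delta> + 1\<rceil>"
  have "\<exists>a\<in>A. dist\<^sub>S p a \<le> C + K"
    if ps: "cayley_geodesic G S ps" "hd ps \<in> A" "last ps \<in> A" and p: "p \<in> set ps" for ps p
  proof -
    obtain b1 b2 where b: "b1 \<in> B" "dist\<^sub>S (hd ps) b1 \<le> R" "b2 \<in> B" "dist\<^sub>S (last ps) b2 \<le> R"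
      using close ps by meson
    then obtain qs where qs: "cayley_geodesic G S qs" "hd qs = b1" "last qs = b2"
      using cayley_geodesic_exists assms by (metis subsetD)
    obtain q where q: "q \<in> set qs" "real (dist\<^sub>S p q) \<le> 2 * real R + 2 * \<delta> + 1"
      using geodesic_fellow_traveller[OF hyp ps(1) qs(1) _ _ p] b qs by auto
    obtain b where "b \<in> B" "dist\<^sub>S q b \<le> K"
      using K qs q b by blast
    moreover have "p \<in> carrier G" "q \<in> carrier G" "b \<in> carrier G"
      using ps p qs q \<open>b \<in> B\<close> assms by (auto simp: cayley_geodesic_def)
    moreover have "dist\<^sub>S p q \<le> C"
      using q(2) unfolding C_def by linarith
    ultimately show ?thesis
      using wdist_triangle[of p q b] assms by (intro bexI[of _ b]) auto
  qed
  then show ?thesis unfolding quasiconvex_def by blast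
qed

lemma quasiconvex_iff_close:
  assumes "hyperbolic_wrt G S" "B \<subseteq> A" "A \<subseteq> carrier G" "\<forall>a\<in>A. \<exists>b\<in>B. dist\<^sub>S a b \<le> R"
  shows "quasiconvex G S A \<longleftrightarrow> quasiconvex G S B"
  using assms quasiconvex_close_subset quasiconvex_close_superset hyperbolic_wrt_iff by metis

lemma close_of_finite_transversal:
  assumes "finite T" "T \<subseteq> carrier G" "A \<subseteq> carrier G" and transversal: "\<forall>a\<in>A. \<exists>t\<in>T. a \<otimes> t \<in> B"
  shows "\<exists>R. \<forall>a\<in>A. \<exists>b\<in>B. dist\<^sub>S a b \<le> R"
proof (intro exI ballI)
  fix a assume "a \<in> A"
  then obtain t where "t \<in> T" "a \<otimes> t \<in> B"
    using transversal by blast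
  moreover have "len\<^sub>S t \<le> (\<Sum>t\<in>T. len\<^sub>S t)"
    using \<open>finite T\<close> \<open>t \<in> T\<close> by (simp add: member_le_sum)
  ultimately show "\<exists>b\<in>B. dist\<^sub>S a b \<le> (\<Sum>t\<in>T. len\<^sub>S t)"
    using wdist_mult_right \<open>a \<in> A\<close> assms by (metis subsetD)
qed

end

definition image_action :: "'b set \<Rightarrow> ('a \<Rightarrow> 'b \<Rightarrow> 'b) \<Rightarrow> 'a \<Rightarrow> 'b set \<Rightarrow> 'b set" where
  "image_action M \<alpha> g = (\<lambda>A \<in> Pow M. \<alpha> g ` A)"

context group_action
begin

lemma acting_group: "group G"
  using group_hom by (simp add: group_hom_def)

lemma action_one: "x \<in> E \<Longrightarrow> \<phi> \<one> x = x"
  using id_eq_one by (metis restrict_apply')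

lemma action_inv_cancel: "g \<in> carrier G \<Longrightarrow> x \<in> E \<Longrightarrow> \<phi> (inv g) (\<phi> g x) = x"
  using composition_rule[of x "inv g" g] action_one group.l_inv[OF acting_group]
    group.inv_closed[OF acting_group] by simp

lemma action_cancel_inv: "g \<in> carrier G \<Longrightarrow> x \<in> E \<Longrightarrow> \<phi> g (\<phi> (inv g) x) = x"
  using composition_rule[of x g "inv g"] action_one group.r_inv[OF acting_group]
    group.inv_closed[OF acting_group] by simp

lemma image_action_Bij: "g \<in> carrier G \<Longrightarrow> image_action E \<phi> g \<in> Bij (Pow E)"
proof -
  assume g: "g \<in> carrier G"
  have "bij_betw (\<phi> g) E E"
    using bij_prop0[OF g] by (simp add: Bij_def)
  then have "bij_betw ((`) (\<phi> g)) (Pow E) (Pow E)"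
    by (rule bij_betw_Pow)
  then have "bij_betw (image_action E \<phi> g) (Pow E) (Pow E)"
    by (rule bij_betw_cong[THEN iffD1, rotated]) (simp add: image_action_def)
  then show ?thesis
    by (simp add: Bij_def image_action_def)
qed

lemma image_action_mult:
  assumes "g \<in> carrier G" "h \<in> carrier G"
  shows "image_action E \<phi> (g \<otimes> h) = compose (Pow E) (image_action E \<phi> g) (image_action E \<phi> h)"
proof
  fix A
  show "image_action E \<phi> (g \<otimes> h) A = compose (Pow E) (image_action E \<phi> g) (image_action E \<phi> h) A"
  proof (cases "A \<in> Pow E")
    case True
    then have "\<phi> h ` A \<in> Pow E"
      using element_image assms(2) by blast
    moreover have "\<phi> (g \<otimes> h) ` A = \<phi> g ` \<phi> h ` A"
      using True composition_rule assms by (auto simp: image_image intro!: image_cong)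
    ultimately show ?thesis
      using True by (simp add: image_action_def compose_def)
  qed (simp add: image_action_def compose_def)
qed

lemma group_action_image_action: "group_action G (Pow E) (image_action E \<phi>)"
  unfolding group_action_def group_hom_def group_hom_axioms_def hom_def
proof (intro conjI CollectI ballI)
  show "group G"
    by (rule acting_group)
  show "group (BijGroup (Pow E))"
    by (rule group_BijGroup)
  show "image_action E \<phi> \<in> carrier G \<rightarrow> carrier (BijGroup (Pow E))"
    using image_action_Bij by (simp add: BijGroup_def)
  fix g h assume "g \<in> carrier G" "h \<in> carrier G"
  then show "image_action E \<phi> (g \<otimes> h) = image_action E \<phi> g \<otimes>\<^bsub>BijGroup (Pow E)\<^esub> image_action E \<phi> h"
    using image_action_Bij image_action_mult by (simp add: BijGroup_def)
qed

lemma rtrancl_closed: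
  assumes "R \<subseteq> E \<times> E" "(x, y) \<in> R\<^sup>*" "x \<in> E"
  shows "y \<in> E"
  using assms(2,3) by (induction rule: rtrancl_induct) (use assms(1) in auto)

lemma image_rtrancl_class:
  assumes closed: "R \<subseteq> E \<times> E" and invariant: "\<And>g x y. g \<in> carrier G \<Longrightarrow> (x, y) \<in> R \<Longrightarrow> (\<phi> g x, \<phi> g y) \<in> R"
    and g: "g \<in> carrier G" and x: "x \<in> E"
  shows "\<phi> g ` {y. (x, y) \<in> R\<^sup>*} = {y. (\<phi> g x, y) \<in> R\<^sup>*}"
proof -
  have forward: "(\<phi> g x, \<phi> g y) \<in> R\<^sup>*" if "(x, y) \<in> R\<^sup>*" "g \<in> carrier G" for g x y
    using that(1) by (induction rule: rtrancl_induct) (use invariant that(2) in \<open>auto intro: rtrancl_into_rtrancl\<close>)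
  show ?thesis
  proof (intro equalityI subsetI)
    fix y assume "y \<in> {y. (\<phi> g x, y) \<in> R\<^sup>*}"
    then have "(\<phi> g x, y) \<in> R\<^sup>*" "y \<in> E"
      using rtrancl_closed[OF closed] element_image g x by blast+
    then have "(x, \<phi> (inv g) y) \<in> R\<^sup>*"
      using forward[of "\<phi> g x" y "inv g"] action_inv_cancel g x group.inv_closed[OF acting_group]
      by simp
    then show "y \<in> \<phi> g ` {y. (x, y) \<in> R\<^sup>*}"
      using action_cancel_inv[OF g \<open>y \<in> E\<close>] by (metis (mono_tags) image_eqI mem_Collect_eq)
  qed (use forward g in auto)
qed

end

context word_metric
begin

text \<open>A subgroup \<open>A\<close> is within bounded distance of the stabilizer of a point with finite \<open>A\<close>-orbit:
  with finitely many \<open>t\<^sub>y \<in> A\<close> mapping \<open>x\<close> to each point \<open>y\<close> of the orbit, \<open>a \<otimes> t\<^sub>y\<close> fixes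
  \<open>x\<close> for \<open>y = inv a \<cdot> x\<close>.\<close>

lemma close_stabilizer_of_finite_orbit:
  assumes act: "group_action G M \<alpha>" and A: "subgroup A G" and "x \<in> M"
    and fin: "finite ((\<lambda>a. \<alpha> a x) ` A)"
  shows "\<exists>R. \<forall>a\<in>A. \<exists>b\<in>A \<inter> stabilizer G \<alpha> x. dist\<^sub>S a b \<le> R"
proof -
  define t where "t y = (SOME a. a \<in> A \<and> \<alpha> a x = y)" for y
  have t: "t y \<in> A" "\<alpha> (t y) x = y" if "y \<in> (\<lambda>a. \<alpha> a x) ` A" for y
    using that someI_ex[of "\<lambda>a. a \<in> A \<and> \<alpha> a x = y"] unfolding t_def by blast+
  have A_carrier: "A \<subseteq> carrier G"
    using A subgroup.subset by blast
  have "\<forall>a\<in>A. \<exists>s\<in>t ` (\<lambda>a. \<alpha> a x) ` A. a \<otimes> s \<in> A \<inter> stabilizer G \<alpha> x"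
  proof
    fix a assume a: "a \<in> A"
    define y where "y = \<alpha> (inv a) x"
    have y: "y \<in> (\<lambda>a. \<alpha> a x) ` A"
      using a A by (simp add: y_def subgroup.m_inv_closed)
    have "a \<in> carrier G" "t y \<in> carrier G"
      using a t[OF y] A_carrier by auto
    then have "\<alpha> (a \<otimes> t y) x = \<alpha> a (\<alpha> (inv a) x)"
      using group_action.composition_rule[OF act \<open>x \<in> M\<close>] t[OF y] y_def by simp
    also have "\<dots> = x"
      using group_action.action_cancel_inv[OF act _ \<open>x \<in> M\<close>] a A_carrier by blast
    finally have "a \<otimes> t y \<in> stabilizer G \<alpha> x"
      using a t[OF y] A_carrier by (auto simp: stabilizer_def)
    moreover have "a \<otimes> t y \<in> A"
      using a t[OF y] A by (simp add: subgroup.m_closed)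
    ultimately show "\<exists>s\<in>t ` (\<lambda>a. \<alpha> a x) ` A. a \<otimes> s \<in> A \<inter> stabilizer G \<alpha> x"
      using y by blast
  qed
  moreover have "t ` (\<lambda>a. \<alpha> a x) ` A \<subseteq> carrier G"
    using t A_carrier by blast
  ultimately show ?thesis
    using close_of_finite_transversal[of "t ` (\<lambda>a. \<alpha> a x) ` A" A] fin A_carrier by blast
qed

end

locale cube_complex_action = cat0_cube_complex V E + word_metric G S
  for V :: "'v set" and E and G :: "('g, 'b) monoid_scheme" (structure) and S +
  fixes \<phi> :: "'g \<Rightarrow> 'v \<Rightarrow> 'v"
  assumes cubical: "cubical_action G V E \<phi>"
begin

text \<open>The actions on vertex sets (edges and cubes of \<open>X\<close>, vertices of \<open>X\<^sup>b\<close>), on sets of these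
  (hyperplanes of \<open>X\<close>, edges of \<open>X\<^sup>b\<close>) and on sets of those (hyperplanes of \<open>X\<^sup>b\<close>).\<close>

abbreviation "act1 \<equiv> image_action V \<phi>"
abbreviation "act2 \<equiv> image_action (Pow V) act1"
abbreviation "act3 \<equiv> image_action (Pow (Pow V)) act2"

lemma action: "group_action G V \<phi>"
  using cubical by (simp add: cubical_action_def)

lemma action1: "group_action G (Pow V) act1"
  using group_action.group_action_image_action[OF action] .

lemma action2: "group_action G (Pow (Pow V)) act2"
  using group_action.group_action_image_action[OF action1] .

lemma action3: "group_action G (Pow (Pow (Pow V))) act3"
  using group_action.group_action_image_action[OF action2] .

lemma act1_eq: "A \<subseteq> V \<Longrightarrow> act1 g A = \<phi> g ` A"
  and act2_eq: "X \<subseteq> Pow V \<Longrightarrow> act2 g X = act1 g ` X"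
  and act3_eq: "Y \<subseteq> Pow (Pow V) \<Longrightarrow> act3 g Y = act2 g ` Y"
  by (simp_all add: image_action_def)

lemma act_adj: "g \<in> carrier G \<Longrightarrow> E u v \<Longrightarrow> E (\<phi> g u) (\<phi> g v)"
  using cubical by (simp add: cubical_action_def)

lemma act_adj_iff:
  assumes g: "g \<in> carrier G" and "u \<in> V" "v \<in> V"
  shows "E (\<phi> g u) (\<phi> g v) \<longleftrightarrow> E u v"
proof
  assume "E (\<phi> g u) (\<phi> g v)"
  from act_adj[OF inv_closed[OF g] this] show "E u v"
    using group_action.action_inv_cancel[OF action g] assms(2,3) by simp
qed (rule act_adj[OF g])

lemma chart_act:
  assumes g: "g \<in> carrier G" and chart: "cube_chart I f C"
  shows "cube_chart I (\<phi> g \<circ> f) (\<phi> g ` C)"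
  unfolding cube_chart_def
proof (intro conjI allI impI)
  show "finite I"
    using chart_finite[OF chart] .
  show "\<phi> g ` C \<subseteq> V"
    using chart_subset[OF chart] group_action.element_image[OF action g] by blast
  have "bij_betw f (Pow I) C"
    using chart by (simp add: cube_chart_def)
  moreover have "bij_betw (\<phi> g) C (\<phi> g ` C)"
    using inj_on_subset[OF group_action.inj_prop[OF action g] chart_subset[OF chart]]
    by (simp add: bij_betw_def)
  ultimately show "bij_betw (\<phi> g \<circ> f) (Pow I) (\<phi> g ` C)"
    by (rule bij_betw_trans)
next
  fix x y assume "x \<subseteq> I" "y \<subseteq> I"
  moreover from this have "f x \<in> V" "f y \<in> V"
    using chart_mem[OF chart] chart_subset[OF chart] by blast+
  ultimately show "E ((\<phi> g \<circ> f) x) ((\<phi> g \<circ> f) y) \<longleftrightarrow> hamming x y = 1"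
    using act_adj_iff[OF g] chart_adj[OF chart] by simp
qed

lemma facet_act:
  assumes g: "g \<in> carrier G" and "is_facet V E D C"
  shows "is_facet V E (\<phi> g ` D) (\<phi> g ` C)"
proof -
  obtain I f i b where "cube_chart I f C" "i \<in> I" "D = coord_face f I i b"
    using assms(2) by (rule facet_chartE)
  then show ?thesis
    using facet_of_chart[OF chart_act[OF g]] by (simp add: coord_face_def image_comp)
qed

lemma facet_subset_V: "is_facet V E D C \<Longrightarrow> D \<subseteq> V \<and> C \<subseteq> V"
  using facet_card(3,5) by blast

lemma subdiv_vertices: "subdiv_adj V E C D \<Longrightarrow> C \<in> Pow V \<and> D \<in> Pow V"
  unfolding subdiv_adj_def using facet_subset_V by blast

lemma act1_subdiv_adj: "g \<in> carrier G \<Longrightarrow> subdiv_adj V E C D \<Longrightarrow> subdiv_adj V E (act1 g C) (act1 g D)"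
  using facet_act subdiv_vertices act1_eq by (auto simp: subdiv_adj_def)

lemma act1_parallel:
  assumes "g \<in> carrier G" "(x, y) \<in> parallel E"
  shows "(act1 g x, act1 g y) \<in> parallel E"
proof -
  have "x \<subseteq> V" "y \<subseteq> V"
    using assms(2) adj_in_V by (auto elim!: parallelE)
  then show ?thesis
    using parallel_image[OF group_action.inj_prop[OF action assms(1)] adj_in_V act_adj[OF assms(1)] assms(2)]
    by (simp add: act1_eq)
qed

lemma act2_parallel:
  assumes "g \<in> carrier G" "(x, y) \<in> parallel (subdiv_adj V E)"
  shows "(act2 g x, act2 g y) \<in> parallel (subdiv_adj V E)"
proof -
  have "x \<subseteq> Pow V" "y \<subseteq> Pow V"
    using assms(2) subdiv_vertices by (auto elim!: parallelE)
  then show ?thesis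
    using parallel_image[OF group_action.inj_prop[OF action1 assms(1)] subdiv_vertices
        act1_subdiv_adj[OF assms(1)] assms(2)]
    by (simp add: act2_eq)
qed

lemma parallel_in_Pow: "parallel E \<subseteq> Pow V \<times> Pow V"
  using adj_in_V by (auto elim!: parallelE)

lemma subdiv_parallel_in_Pow: "parallel (subdiv_adj V E) \<subseteq> Pow (Pow V) \<times> Pow (Pow V)"
  using subdiv_vertices by (auto elim!: parallelE)

lemma hyperplane_of_act:
  assumes "g \<in> carrier G" "e \<subseteq> V"
  shows "act2 g (hyperplane_of E e) = hyperplane_of E (act1 g e)"
proof -
  have "hyperplane_of E e \<subseteq> Pow V"
    using hyperplane_of_subset[OF adj_in_V assms(2)] .
  then show ?thesis
    using group_action.image_rtrancl_class[OF action1 parallel_in_Pow act1_parallel assms(1)] assms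
    by (simp add: act2_eq hyperplane_of_def)
qed

lemma subdiv_hyperplane_of_act:
  assumes "g \<in> carrier G" "x \<subseteq> Pow V"
  shows "act3 g (hyperplane_of (subdiv_adj V E) x) = hyperplane_of (subdiv_adj V E) (act2 g x)"
proof -
  have "hyperplane_of (subdiv_adj V E) x \<subseteq> Pow (Pow V)"
    using hyperplane_of_subset[OF subdiv_vertices assms(2)] .
  then show ?thesis
    using group_action.image_rtrancl_class[OF action2 subdiv_parallel_in_Pow act2_parallel assms(1)] assms
    by (simp add: act3_eq hyperplane_of_def)
qed

end

context cube_complex_action
begin

lemma act2_eq_image:
  assumes "X \<subseteq> Pow V"
  shows "act2 g X = (\<lambda>A. \<phi> g ` A) ` X"
proof -
  have "act1 g A = \<phi> g ` A" if "A \<in> X" for A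
    using that assms by (intro act1_eq) blast
  then show ?thesis
    unfolding act2_eq[OF assms] by (rule image_cong[OF refl])
qed

lemma hyp_stab_eq_stabilizer:
  assumes "H \<subseteq> Pow V"
  shows "hyp_stab G \<phi> H = stabilizer G act2 H"
proof -
  have "(\<lambda>e. \<phi> g ` e) ` H = act2 g H" for g
    by (rule act2_eq_image[OF assms, symmetric])
  then show ?thesis
    unfolding hyp_stab_def stabilizer_def by (simp only:)
qed

lemma subdiv_hyp_stab_eq_stabilizer:
  assumes "Hb \<subseteq> Pow (Pow V)"
  shows "hyp_stab G (\<lambda>g C. \<phi> g ` C) Hb = stabilizer G act3 Hb"
proof -
  have "act2 g x = (\<lambda>C. \<phi> g ` C) ` x" if "x \<in> Hb" for g x
    using that assms by (intro act2_eq_image) blast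
  then have "(\<lambda>x. (\<lambda>C. \<phi> g ` C) ` x) ` Hb = act3 g Hb" for g
    unfolding act3_eq[OF assms] by (rule image_cong[OF refl, symmetric])
  then show ?thesis
    unfolding hyp_stab_def stabilizer_def by (simp only:)
qed

lemma transverse_act:
  assumes g: "g \<in> carrier G" and "h \<subseteq> Pow V" "transverse h x"
  shows "transverse (act2 g h) (act2 g x)"
proof -
  obtain C D where x: "x = {C, D}" and facet: "is_facet V E D C" and "dual_edges D C \<inter> h \<noteq> {}"
    using assms(3) unfolding transverse_def by (elim exE conjE) (rule that)
  then obtain p q where pq: "p \<in> D" "q \<in> C" "q \<notin> D" "E p q" "{p, q} \<in> h"
    unfolding dual_edges_def by blast
  have V: "D \<subseteq> V" "C \<subseteq> V" "p \<in> V" "q \<in> V"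
    using facet_subset_V[OF facet] adj_in_V[OF pq(4)] by auto
  have "\<phi> g q \<notin> \<phi> g ` D"
    using pq(3) V inj_on_image_mem_iff[OF group_action.inj_prop[OF action g]] by blast
  then have "{\<phi> g p, \<phi> g q} \<in> dual_edges (\<phi> g ` D) (\<phi> g ` C)"
    using pq act_adj[OF g] unfolding dual_edges_def by blast
  moreover have "{\<phi> g p, \<phi> g q} \<in> act2 g h"
    using pq(5) V assms(2) by (force simp: act2_eq act1_eq)
  moreover have "act2 g x = {\<phi> g ` C, \<phi> g ` D}"
    using x V by (simp add: act2_eq act1_eq)
  ultimately show ?thesis
    using transverse_facet_iff[OF facet_act[OF g facet]] by auto
qed

context
  fixes u v
  assumes uv: "E u v"
begin

abbreviation "H_uv \<equiv> hyperplane_of E {u, v}"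
abbreviation "Hb_uv \<equiv> hyperplane_of (subdiv_adj V E) {{u, v}, {u}}"

lemma edge_subsets: "{u, v} \<subseteq> V" "{{u, v}, {u}} \<subseteq> Pow V"
  using adj_in_V[OF uv] by auto

lemma H_subset: "H_uv \<subseteq> Pow V"
  using hyperplane_of_subset[OF adj_in_V edge_subsets(1)] .

lemma Hb_subset: "Hb_uv \<subseteq> Pow (Pow V)"
  using hyperplane_of_subset[OF subdiv_vertices edge_subsets(2)] .

text \<open>A stabilizer of \<open>Hb_uv\<close> maps the subdivision edge \<open>{{u, v}, {u}}\<close>, which is transverse to \<open>H_uv\<close>,
  to another edge of \<open>Hb_uv\<close>, hence again transverse to \<open>H_uv\<close>; as the hyperplane of \<open>X\<close> to which an
  edge is transverse is unique, it stabilizes \<open>H_uv\<close>.\<close>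

lemma subdiv_stabilizer_subset: "stabilizer G act3 Hb_uv \<subseteq> stabilizer G act2 H_uv"
proof
  fix g assume "g \<in> stabilizer G act3 Hb_uv"
  then have g: "g \<in> carrier G" and "act3 g Hb_uv = Hb_uv"
    by (auto simp: stabilizer_def)
  then have "act2 g {{u, v}, {u}} \<in> Hb_uv"
    using Hb_subset by (auto simp: act3_eq hyperplane_of_def)
  moreover have "transverse H_uv {{u, v}, {u}}"
    using transverse_facet_iff[OF edge_facet[OF uv]] uv
    by (auto simp: dual_edges_def hyperplane_of_def adj_irrefl)
  ultimately have "transverse H_uv (act2 g {{u, v}, {u}})"
    using transverse_rtrancl by (auto simp: hyperplane_of_def)
  moreover have "transverse (act2 g H_uv) (act2 g {{u, v}, {u}})"
    using transverse_act[OF g H_subset \<open>transverse H_uv {{u, v}, {u}}\<close>] .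
  ultimately have "act2 g H_uv = H_uv"
    using transverse_unique hyperplane_of_act[OF g edge_subsets(1)] by metis
  then show "g \<in> stabilizer G act2 H_uv"
    using g by (simp add: stabilizer_def)
qed

lemma stabilizer_orbit_subset:
  assumes a: "a \<in> stabilizer G act2 H_uv"
  shows "act3 a Hb_uv \<in> {Hb_uv, hyperplane_of (subdiv_adj V E) {{u, v}, {v}}}"
proof -
  have a_carrier: "a \<in> carrier G" and "act2 a H_uv = H_uv"
    using a by (auto simp: stabilizer_def)
  then have "act1 a {u, v} \<in> H_uv"
    using H_subset by (auto simp: act2_eq hyperplane_of_def)
  then have "(act1 a {u, v}, {u, v}) \<in> (parallel E)\<^sup>*"
    using rtrancl_parallel_sym[of E, OF adj_sym] by (simp add: hyperplane_of_def)
  moreover have "\<phi> a u \<in> act1 a {u, v}"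
    using edge_subsets by (simp add: act1_eq)
  ultimately obtain u' where u': "u' \<in> {u, v}"
    "({act1 a {u, v}, {\<phi> a u}}, {{u, v}, {u'}}) \<in> (parallel (subdiv_adj V E))\<^sup>*"
    by (rule lift_parallel)
  have "act2 a {{u, v}, {u}} = {act1 a {u, v}, {\<phi> a u}}"
    using edge_subsets by (simp add: act2_eq act1_eq)
  then have "act3 a Hb_uv = hyperplane_of (subdiv_adj V E) {act1 a {u, v}, {\<phi> a u}}"
    using subdiv_hyperplane_of_act[OF a_carrier edge_subsets(2)] by simp
  also have "\<dots> = hyperplane_of (subdiv_adj V E) {{u, v}, {u'}}"
    using hyperplane_of_eq[of "subdiv_adj V E", OF subdiv_adj_sym] u'(2) hyperplane_of_def by blast
  finally show ?thesis
    using u'(1) by auto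
qed

lemma stabilizers_close:
  "\<exists>R. \<forall>a\<in>stabilizer G act2 H_uv. \<exists>b\<in>stabilizer G act3 Hb_uv. dist\<^sub>S a b \<le> R"
proof -
  have "(\<lambda>a. act3 a Hb_uv) ` stabilizer G act2 H_uv \<subseteq> {Hb_uv, hyperplane_of (subdiv_adj V E) {{u, v}, {v}}}"
    using stabilizer_orbit_subset by blast
  then have "finite ((\<lambda>a. act3 a Hb_uv) ` stabilizer G act2 H_uv)"
    by (rule finite_subset) simp
  moreover have "subgroup (stabilizer G act2 H_uv) G"
    using group_action.stabilizer_subgroup[OF action2] H_subset by blast
  ultimately have "\<exists>R. \<forall>a\<in>stabilizer G act2 H_uv. \<exists>b\<in>stabilizer G act2 H_uv \<inter> stabilizer G act3 Hb_uv.
      dist\<^sub>S a b \<le> R"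
    using close_stabilizer_of_finite_orbit[OF action3] Hb_subset by blast
  then show ?thesis
    by blast
qed

lemma quasiconvex_stabilizers_iff:
  assumes "hyperbolic_wrt G S"
  shows "quasiconvex G S (hyp_stab G \<phi> H_uv) \<longleftrightarrow> quasiconvex G S (hyp_stab G (\<lambda>g C. \<phi> g ` C) Hb_uv)"
proof -
  obtain R where "\<forall>a\<in>stabilizer G act2 H_uv. \<exists>b\<in>stabilizer G act3 Hb_uv. dist\<^sub>S a b \<le> R"
    using stabilizers_close by blast
  from quasiconvex_iff_close[OF assms subdiv_stabilizer_subset group_action.stabilizer_subset[OF action2] this]
  show ?thesis
    using hyp_stab_eq_stabilizer[OF H_subset] subdiv_hyp_stab_eq_stabilizer[OF Hb_subset] by simp
qed

end

lemma hyperplanesE: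
  assumes "H \<in> hyperplanes E"
  obtains u v where "E u v" "H = hyperplane_of E {u, v}"
  using assms unfolding hyperplanes_eq edges_def by blast

lemma subdiv_hyperplanesE:
  assumes "Hb \<in> hyperplanes (subdiv_adj V E)"
  obtains u v where "E u v" "Hb = hyperplane_of (subdiv_adj V E) {{u, v}, {u}}"
proof -
  obtain C D where "subdiv_adj V E C D" "Hb = hyperplane_of (subdiv_adj V E) {C, D}"
    using assms unfolding hyperplanes_eq edges_def by blast
  moreover obtain u v where "E u v" "({C, D}, {{u, v}, {u}}) \<in> (parallel (subdiv_adj V E))\<^sup>*"
    using subdiv_adj_parallel_edge calculation(1) by blast
  moreover from this have "{{u, v}, {u}} \<in> hyperplane_of (subdiv_adj V E) {C, D}"
    by (simp add: hyperplane_of_def)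
  ultimately show ?thesis
    using that hyperplane_of_eq[of "subdiv_adj V E", OF subdiv_adj_sym] by metis
qed

lemma hyperplane_of_edge: "E u v \<Longrightarrow> hyperplane_of E {u, v} \<in> hyperplanes E"
  unfolding hyperplanes_eq edges_def by blast

lemma subdiv_hyperplane_of_edge:
  assumes "E u v"
  shows "hyperplane_of (subdiv_adj V E) {{u, v}, {u}} \<in> hyperplanes (subdiv_adj V E)"
proof -
  have "subdiv_adj V E {u, v} {u}"
    using edge_facet[OF assms] by (simp add: subdiv_adj_def)
  then show ?thesis
    unfolding hyperplanes_eq edges_def by blast
qed

theorem quasiconvex_hyperplane_stabilizers_iff:
  assumes "hyperbolic_wrt G S"
  shows "(\<forall>H \<in> hyperplanes E. quasiconvex G S (hyp_stab G \<phi> H)) \<longleftrightarrow>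
    (\<forall>H \<in> hyperplanes (subdiv_adj V E). quasiconvex G S (hyp_stab G (\<lambda>g C. \<phi> g ` C) H))"
proof (intro iffI ballI)
  fix Hb assume qc: "\<forall>H \<in> hyperplanes E. quasiconvex G S (hyp_stab G \<phi> H)"
    and "Hb \<in> hyperplanes (subdiv_adj V E)"
  then obtain u v where "E u v" "Hb = hyperplane_of (subdiv_adj V E) {{u, v}, {u}}"
    by (auto elim: subdiv_hyperplanesE)
  then show "quasiconvex G S (hyp_stab G (\<lambda>g C. \<phi> g ` C) Hb)"
    using qc hyperplane_of_edge quasiconvex_stabilizers_iff[OF _ assms] by blast
next
  fix H assume qc: "\<forall>H \<in> hyperplanes (subdiv_adj V E). quasiconvex G S (hyp_stab G (\<lambda>g C. \<phi> g ` C) H)"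
    and "H \<in> hyperplanes E"
  then obtain u v where "E u v" "H = hyperplane_of E {u, v}"
    by (auto elim: hyperplanesE)
  then show "quasiconvex G S (hyp_stab G \<phi> H)"
    using qc subdiv_hyperplane_of_edge quasiconvex_stabilizers_iff[OF _ assms] by blast
qed

end

theorem lemma3p4:
  fixes G :: "('g, 'b) monoid_scheme" and S :: "'g set"
    and V :: "'v set" and E :: "'v \<Rightarrow> 'v \<Rightarrow> bool" and \<phi> :: "'g \<Rightarrow> 'v \<Rightarrow> 'v"
  assumes "group G"
    and "fin_gen_set G S"
    and "hyperbolic_wrt G S"
    and "median_graph V E"
    and "cubical_action G V E \<phi>"
  shows "(\<forall>H \<in> hyperplanes E. quasiconvex G S (hyp_stab G \<phi> H)) \<longleftrightarrow>
         (\<forall>H \<in> hyperplanes (subdiv_adj V E).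
             quasiconvex G S (hyp_stab G (\<lambda>g C. \<phi> g ` C) H))"
proof -
  interpret cube_complex_action V E G S \<phi>
    using assms by (simp add: cube_complex_action_def cube_complex_action_axioms_def
        cat0_cube_complex_def word_metric_def word_metric_axioms_def)
  show ?thesis
    using quasiconvex_hyperplane_stabilizers_iff[OF assms(3)] .
qed

end
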